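(* Let $G$ and $H$ be graphs, each with at least $3$ vertices, and suppose $G$ is connected. Then $$\lambda_3(G\circ H)\ \ge\ \lambda_3(H)+\lambda_3(G)\,|V(H)|.$$ Moreover, this lower bound is sharp: there exist such $G,H$ for which equality holds.
   Context: All graphs are simple, finite and undirected. For a graph $G$ and a set $S\subseteq V(G)$ with $|S|\ge 2$, an $S$-tree (Steiner tree connecting $S$) is a subgraph of $G$ that is a tree containing all vertices of $S$. $\lambda(S)$ (also written $\lambda_G(S)$) is the maximum number of pairwise edge-disjoint $S$-trees in $G$. The generalized $k$-edge-connectivity is $\lambda_k(G)=\min\{\lambda(S): S\subseteq V(G),\ |S|=k\}$, with the convention $\lambda_k(G)=0$ if $G$ is disconnected. The lexicographic product $G\circ H$ has vertex set $V(G)\times V(H)$, and $(u,v)$ is adjacent to $(u',v')$ iff either $uu'\in E(G)$, or $u=u'$ and $vv'\in E(H)$. *)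

theory Defs
  imports Main
begin

definition graph :: "'a set \<Rightarrow> 'a set set \<Rightarrow> bool" where
  "graph V E \<longleftrightarrow> finite V \<and> (\<forall>e\<in>E. \<exists>x y. x \<in> V \<and> y \<in> V \<and> x \<noteq> y \<and> e = {x, y})"

definition adj_rel :: "'a set \<Rightarrow> 'a set set \<Rightarrow> ('a \<times> 'a) set" where
  "adj_rel V E = {(a, b). a \<in> V \<and> b \<in> V \<and> {a, b} \<in> E}"

definition connected_graph :: "'a set \<Rightarrow> 'a set set \<Rightarrow> bool" where
  "connected_graph V E \<longleftrightarrow> (\<forall>x\<in>V. \<forall>y\<in>V. (x, y) \<in> (adj_rel V E)\<^sup>*)"

definition is_tree :: "'a set \<Rightarrow> 'a set set \<Rightarrow> bool" where
  "is_tree V E \<longleftrightarrow> V \<noteq> {} \<and> graph V E \<and> connected_graph V E \<and> card E + 1 = card V"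

definition steiner_tree :: "'a set \<Rightarrow> 'a set set \<Rightarrow> 'a set \<Rightarrow> 'a set \<Rightarrow> 'a set set \<Rightarrow> bool" where
  "steiner_tree V E S VT ET \<longleftrightarrow> S \<subseteq> VT \<and> VT \<subseteq> V \<and> ET \<subseteq> E \<and> is_tree VT ET"

definition lambda_S :: "'a set \<Rightarrow> 'a set set \<Rightarrow> 'a set \<Rightarrow> nat" where
  "lambda_S V E S = Max {k. \<exists>T :: nat \<Rightarrow> 'a set \<times> 'a set set.
      (\<forall>i<k. steiner_tree V E S (fst (T i)) (snd (T i))) \<and>
      (\<forall>i<k. \<forall>j<k. i \<noteq> j \<longrightarrow> snd (T i) \<inter> snd (T j) = {})}"

definition lambda_k :: "nat \<Rightarrow> 'a set \<Rightarrow> 'a set set \<Rightarrow> nat" where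
  "lambda_k k V E = (if connected_graph V E
      then Min {lambda_S V E S | S. S \<subseteq> V \<and> card S = k} else 0)"

definition lex_edges :: "'a set \<Rightarrow> 'a set set \<Rightarrow> 'b set \<Rightarrow> 'b set set \<Rightarrow> ('a \<times> 'b) set set" where
  "lex_edges VG EG VH EH = {{(u, v), (u', v')} | u v u' v'.
      u \<in> VG \<and> u' \<in> VG \<and> v \<in> VH \<and> v' \<in> VH \<and>
      ({u, u'} \<in> EG \<or> (u = u' \<and> {v, v'} \<in> EH))}"

end

theory Submission
  imports Defs "HOL-Combinatorics.Transposition"
begin

text \<open>
  Fix a 3-set \<open>S\<close> of vertices of \<open>G \<circ> H\<close> and enlarge its projections to 3-sets \<open>A \<subseteq> V(G)\<close> and
  \<open>B \<subseteq> V(H)\<close>. Take \<open>k = \<lambda>\<^sub>3(G)\<close> edge-disjoint \<open>A\<close>-trees \<open>T\<^sub>t\<close> of \<open>G\<close> and \<open>l = \<lambda>\<^sub>3(H)\<close>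
  edge-disjoint \<open>B\<close>-trees \<open>R\<^sub>p\<close> of \<open>H\<close>. Each \<open>T\<^sub>t\<close> yields \<open>|V(H)|\<close> edge-disjoint \<open>S\<close>-trees:
  for every \<open>j \<in> V(H)\<close> lift \<open>T\<^sub>t\<close> to the vertices \<open>(x, \<sigma> x j)\<close>, with \<open>\<sigma> x\<close> a permutation of
  \<open>V(H)\<close>, and hang each vertex of \<open>S\<close> missed by the lift as a leaf from the lift of a tree
  neighbour. The permutations only matter when \<open>S\<close> meets three fibres; with fewer fibres the
  neighbours can be chosen so that no two copies share a leaf edge. The \<open>l\<close> further trees are
  the copies of \<open>R\<^sub>p\<close> in the fibre of \<open>S\<close> if \<open>S\<close> lies in one fibre, and otherwise \<open>T\<^sub>0 \<times> R\<^sub>p\<close>, in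
  which the fibre copies of \<open>R\<^sub>p\<close> are joined by one edge per edge of \<open>T\<^sub>0\<close>, chosen to avoid all
  lifts. Hence \<open>\<lambda>(S) \<ge> k |V(H)| + l\<close>.

  Equality holds for the path on three vertices and the edgeless graph on three vertices: then
  \<open>\<lambda>\<^sub>3(H) = 0\<close>, and \<open>(0, 0)\<close> has degree 3 in \<open>G \<circ> H\<close>, which bounds \<open>\<lambda>\<^sub>3(G \<circ> H)\<close> by 3.
\<close>

section \<open>Graphs and trees\<close>

lemma graph_edgeD:
  "graph V E \<Longrightarrow> e \<in> E \<Longrightarrow> \<exists>x y. x \<in> V \<and> y \<in> V \<and> x \<noteq> y \<and> e = {x, y}"
  unfolding graph_def by blast

lemma graph_finite_edges:
  assumes "graph V E"
  shows "finite E"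
proof (rule finite_subset)
  show "E \<subseteq> Pow V"
  proof
    fix e assume "e \<in> E"
    then obtain x y where "x \<in> V" "y \<in> V" "e = {x, y}" using graph_edgeD[OF assms] by blast
    then show "e \<in> Pow V" by simp
  qed
  show "finite (Pow V)" using assms unfolding graph_def by simp
qed

lemma graph_doubleton_edgeD:
  assumes "graph V E" "{x, y} \<in> E"
  shows "x \<in> V" "y \<in> V" "x \<noteq> y"
proof -
  obtain a b where "a \<in> V" "b \<in> V" "a \<noteq> b" "{x, y} = {a, b}"
    using graph_edgeD[OF assms] by blast
  then show "x \<in> V" "y \<in> V" "x \<noteq> y" by (auto simp: doubleton_eq_iff)
qed

lemma graph_edge_ne_singleton:
  assumes "graph V E" "e \<in> E"
  shows "e \<noteq> {x}"
proof
  assume "e = {x}"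
  moreover obtain a b where "a \<noteq> b" "e = {a, b}" using graph_edgeD[OF assms] by blast
  ultimately show False by auto
qed

lemma adj_rel_mono: "V \<subseteq> V' \<Longrightarrow> E \<subseteq> E' \<Longrightarrow> adj_rel V E \<subseteq> adj_rel V' E'"
  unfolding adj_rel_def by auto

lemma ex_notin_of_card_less:
  assumes "finite F" "card F < card V"
  shows "\<exists>z\<in>V. z \<notin> F"
proof (rule ccontr)
  assume "\<not> ?thesis"
  then have "card V \<le> card F" using card_mono[OF assms(1)] by blast
  with assms(2) show False by simp
qed

lemma ex_other_of_card_ge_2: "2 \<le> card V \<Longrightarrow> \<exists>z\<in>V. z \<noteq> a"
  using ex_notin_of_card_less[of "{a}" V] by simp

lemma ex_other_of_card_ge_3: "3 \<le> card V \<Longrightarrow> \<exists>z\<in>V. z \<noteq> a \<and> z \<noteq> b"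
proof -
  assume "3 \<le> card V"
  moreover have "card {a, b} \<le> 2" by (cases "a = b") auto
  ultimately show ?thesis using ex_notin_of_card_less[of "{a, b}" V] by auto
qed

lemma is_treeD:
  assumes "is_tree V E"
  shows "graph V E" "finite V" "V \<noteq> {}" "connected_graph V E" "card E + 1 = card V"
  using assms by (simp_all add: is_tree_def graph_def)

lemma is_tree_singleton: "is_tree {x} {}"
  unfolding is_tree_def graph_def connected_graph_def by auto

lemma is_tree_neighbour:
  assumes tree: "is_tree V E" and "x \<in> V" and "2 \<le> card V"
  obtains y where "{x, y} \<in> E"
proof -
  obtain z where z: "z \<in> V" "z \<noteq> x"
    using ex_other_of_card_ge_2[OF \<open>2 \<le> card V\<close>] by blast
  have "(x, z) \<in> (adj_rel V E)\<^sup>*"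
    using is_treeD(4)[OF tree] \<open>x \<in> V\<close> z(1) unfolding connected_graph_def by blast
  then have "\<exists>y. {x, y} \<in> E" using z(2)
    by (cases rule: converse_rtranclE) (auto simp: adj_rel_def)
  with that show ?thesis by blast
qed

lemma rtrancl_edge_leaving_set:
  assumes "(x, y) \<in> R\<^sup>*" "x \<in> P" "y \<notin> P"
  shows "\<exists>a b. (a, b) \<in> R \<and> a \<in> P \<and> b \<notin> P"
  using assms by (induction rule: rtrancl_induct) auto

lemma is_tree_image:
  assumes tree: "is_tree V E" and inj: "inj_on f V"
  shows "is_tree (f ` V) ((`) f ` E)"
proof -
  have g: "graph V E" and ce: "card E + 1 = card V"
    using is_treeD[OF tree] by auto
  have edge_subset: "e \<subseteq> V" if "e \<in> E" for e
    using graph_edgeD[OF g that] by blast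
  have "graph (f ` V) ((`) f ` E)"
    unfolding graph_def
  proof (intro conjI ballI)
    show "finite (f ` V)" using is_treeD(2)[OF tree] by simp
    fix e' assume "e' \<in> (`) f ` E"
    then obtain x y where "x \<in> V" "y \<in> V" "x \<noteq> y" "e' = {f x, f y}"
      using graph_edgeD[OF g] by force
    moreover from this have "f x \<noteq> f y" using inj by (simp add: inj_on_eq_iff)
    ultimately show "\<exists>a b. a \<in> f ` V \<and> b \<in> f ` V \<and> a \<noteq> b \<and> e' = {a, b}"
      by blast
  qed
  moreover have "connected_graph (f ` V) ((`) f ` E)"
    unfolding connected_graph_def
  proof (intro ballI)
    fix a b assume "a \<in> f ` V" "b \<in> f ` V"
    then obtain x y where xy: "x \<in> V" "y \<in> V" "a = f x" "b = f y" by blast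
    have "(x, y) \<in> (adj_rel V E)\<^sup>*"
      using is_treeD(4)[OF tree] xy unfolding connected_graph_def by blast
    then have "(f x, f y) \<in> (adj_rel (f ` V) ((`) f ` E))\<^sup>*"
    proof (induction rule: rtrancl_induct)
      case (step y z)
      then have "(f y, f z) \<in> adj_rel (f ` V) ((`) f ` E)"
        unfolding adj_rel_def by (auto intro!: image_eqI[where x="{y, z}"])
      with step.IH show ?case by simp
    qed simp
    then show "(a, b) \<in> (adj_rel (f ` V) ((`) f ` E))\<^sup>*" using xy by simp
  qed
  moreover have "inj_on ((`) f) E"
    by (rule inj_onI) (use inj edge_subset in \<open>simp add: inj_on_image_eq_iff\<close>)
  then have "card ((`) f ` E) + 1 = card (f ` V)"
    using ce inj by (simp add: card_image)
  ultimately show ?thesis using is_treeD(3)[OF tree] unfolding is_tree_def by auto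
qed

lemma connected_graph_add_leaves:
  assumes conn: "connected_graph V E" and att: "\<And>p. p \<in> P \<Longrightarrow> att p \<in> V"
  shows "connected_graph (V \<union> P) (E \<union> (\<lambda>p. {p, att p}) ` P)"
  unfolding connected_graph_def
proof (intro ballI)
  let ?V = "V \<union> P" and ?E = "E \<union> (\<lambda>p. {p, att p}) ` P"
  have to_V: "\<exists>v\<in>V. (x, v) \<in> (adj_rel ?V ?E)\<^sup>* \<and> (v, x) \<in> (adj_rel ?V ?E)\<^sup>*" if "x \<in> ?V" for x
  proof (cases "x \<in> V")
    case False
    with that att have "(x, att x) \<in> adj_rel ?V ?E" "(att x, x) \<in> adj_rel ?V ?E" "att x \<in> V"
      unfolding adj_rel_def by (auto simp: insert_commute)
    then show ?thesis by blast
  qed auto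
  fix x y assume "x \<in> ?V" "y \<in> ?V"
  then obtain a b where ab: "a \<in> V" "b \<in> V"
    "(x, a) \<in> (adj_rel ?V ?E)\<^sup>*" "(b, y) \<in> (adj_rel ?V ?E)\<^sup>*"
    using to_V by blast
  have "(a, b) \<in> (adj_rel V E)\<^sup>*" using conn ab unfolding connected_graph_def by blast
  moreover have "adj_rel V E \<subseteq> adj_rel ?V ?E" by (rule adj_rel_mono) auto
  ultimately have "(a, b) \<in> (adj_rel ?V ?E)\<^sup>*" using rtrancl_mono by blast
  with ab show "(x, y) \<in> (adj_rel ?V ?E)\<^sup>*" by (meson rtrancl_trans)
qed

lemma is_tree_add_leaves:
  assumes tree: "is_tree V E" and "finite P" and disj: "P \<inter> V = {}"
    and att: "\<And>p. p \<in> P \<Longrightarrow> att p \<in> V"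
  shows "is_tree (V \<union> P) (E \<union> (\<lambda>p. {p, att p}) ` P)"
proof -
  let ?V = "V \<union> P" and ?E = "E \<union> (\<lambda>p. {p, att p}) ` P"
  have g: "graph V E" and ce: "card E + 1 = card V" using is_treeD[OF tree] by auto
  have "graph ?V ?E"
    unfolding graph_def
  proof (intro conjI ballI)
    show "finite ?V" using is_treeD(2)[OF tree] \<open>finite P\<close> by simp
    fix e assume "e \<in> ?E"
    then show "\<exists>x y. x \<in> ?V \<and> y \<in> ?V \<and> x \<noteq> y \<and> e = {x, y}"
    proof
      assume "e \<in> E"
      then show ?thesis using graph_edgeD[OF g] by blast
    next
      assume "e \<in> (\<lambda>p. {p, att p}) ` P"
      then obtain p where "p \<in> P" "e = {p, att p}" by blast
      moreover have "att p \<in> V" "p \<notin> V" using att[OF \<open>p \<in> P\<close>] disj \<open>p \<in> P\<close> by auto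
      ultimately show ?thesis by (intro exI[of _ p] exI[of _ "att p"]) auto
    qed
  qed
  moreover have "connected_graph ?V ?E"
    using is_treeD(4)[OF tree] att by (rule connected_graph_add_leaves)
  moreover have "card ?E + 1 = card ?V"
  proof -
    have "inj_on (\<lambda>p. {p, att p}) P"
    proof (rule inj_onI)
      fix p q assume pq: "p \<in> P" "q \<in> P" "{p, att p} = {q, att q}"
      have "att p \<in> V" "att q \<in> V" "p \<notin> V" "q \<notin> V" using att disj pq by auto
      with pq(3) show "p = q" by (metis doubleton_eq_iff)
    qed
    then have "card ((\<lambda>p. {p, att p}) ` P) = card P" by (rule card_image)
    moreover have "E \<inter> (\<lambda>p. {p, att p}) ` P = {}"
    proof -
      have "p \<notin> P" if "{p, att p} \<in> E" for p
        using graph_doubleton_edgeD(1)[OF g that] disj by blast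
      then show ?thesis by blast
    qed
    then have "card ?E = card E + card ((\<lambda>p. {p, att p}) ` P)"
      using graph_finite_edges[OF g] \<open>finite P\<close> by (simp add: card_Un_disjoint)
    moreover have "card ?V = card V + card P"
      using is_treeD(2)[OF tree] \<open>finite P\<close> disj by (simp add: card_Un_disjoint Int_commute)
    ultimately show ?thesis using ce by simp
  qed
  ultimately show ?thesis using is_treeD(3)[OF tree] unfolding is_tree_def by auto
qed

lemma spanning_tree_exists:
  assumes g: "graph V E" and conn: "connected_graph V E" and "x0 \<in> V"
  obtains ET where "ET \<subseteq> E" "is_tree V ET"
proof -
  have fin: "finite V" using g unfolding graph_def by blast
  have grow: "\<exists>VT ET. is_tree VT ET \<and> x0 \<in> VT \<and> VT \<subseteq> V \<and> ET \<subseteq> E \<and> m \<le> card VT"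
    if "m \<le> card V" for m
    using that
  proof (induction m)
    case 0
    show ?case using is_tree_singleton[of x0] \<open>x0 \<in> V\<close>
      by (intro exI[of _ "{x0}"] exI[of _ "{}"]) auto
  next
    case (Suc m)
    then obtain VT ET where t: "is_tree VT ET" "x0 \<in> VT" "VT \<subseteq> V" "ET \<subseteq> E" "m \<le> card VT"
      by auto
    show ?case
    proof (cases "VT = V")
      case True
      with t Suc.prems show ?thesis by blast
    next
      case False
      then obtain v where "v \<in> V" "v \<notin> VT" using t(3) by blast
      then have "(x0, v) \<in> (adj_rel V E)\<^sup>*" using conn \<open>x0 \<in> V\<close> unfolding connected_graph_def by blast
      then obtain a b where ab: "(a, b) \<in> adj_rel V E" "a \<in> VT" "b \<notin> VT"
        using rtrancl_edge_leaving_set[OF _ t(2) \<open>v \<notin> VT\<close>] by blast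
      then have "is_tree (VT \<union> {b}) (ET \<union> (\<lambda>p. {p, a}) ` {b})"
        by (intro is_tree_add_leaves[OF t(1)]) auto
      moreover have "card (VT \<union> {b}) = Suc (card VT)"
        using ab(3) finite_subset[OF t(3) fin] by simp
      moreover have "{a, b} \<in> E" "b \<in> V" using ab(1) unfolding adj_rel_def by auto
      ultimately show ?thesis using t
        by (intro exI[of _ "VT \<union> {b}"] exI[of _ "ET \<union> {{a, b}}"]) (auto simp: insert_commute)
    qed
  qed
  obtain VT ET where "is_tree VT ET" "VT \<subseteq> V" "ET \<subseteq> E" "card V \<le> card VT"
    using grow[of "card V"] by auto
  moreover from this have "VT = V" using card_seteq[OF fin] by blast
  ultimately show ?thesis using that by blast
qed

lemma is_tree_nonmutual_neighbours:
  assumes tree: "is_tree V E" and "3 \<le> card V" and u: "u \<in> V" "u' \<in> V" "u \<noteq> u'"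
  obtains a b where "{u, a} \<in> E" "{u', b} \<in> E" "\<not> (a = u' \<and> b = u)"
proof -
  have "2 \<le> card V" using \<open>3 \<le> card V\<close> by simp
  obtain a0 b0 where ab0: "{u, a0} \<in> E" "{u', b0} \<in> E"
    using is_tree_neighbour[OF tree u(1)] is_tree_neighbour[OF tree u(2)] \<open>2 \<le> card V\<close> by metis
  show ?thesis
  proof (cases "\<exists>a b. {u, a} \<in> E \<and> {u', b} \<in> E \<and> \<not> (a = u' \<and> b = u)")
    case True
    then show ?thesis using that by blast
  next
    case False
    then have only: "z \<in> {u, u'}" if "{y, z} \<in> E" "y \<in> {u, u'}" for y z
      using that ab0 by blast
    obtain z where z: "z \<in> V" "z \<noteq> u" "z \<noteq> u'" using ex_other_of_card_ge_3[OF \<open>3 \<le> card V\<close>] by blast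
    have "(u, z) \<in> (adj_rel V E)\<^sup>*"
      using is_treeD(4)[OF tree] u(1) z(1) unfolding connected_graph_def by blast
    then have "z \<in> {u, u'}"
    proof (induction rule: rtrancl_induct)
      case (step y z)
      then show ?case using only unfolding adj_rel_def by blast
    qed simp
    with z show ?thesis by simp
  qed
qed

locale tree_blowup =
  fixes X :: "'a set" and ET :: "'a set set" and VR :: "'b set" and ER :: "'b set set"
    and link :: "'a set \<Rightarrow> ('a \<times> 'b) set"
  assumes tree_X: "is_tree X ET" and tree_R: "is_tree VR ER"
    and link: "\<And>e. e \<in> ET \<Longrightarrow> \<exists>x y a b. e = {x, y} \<and> link e = {(x, a), (y, b)} \<and> a \<in> VR \<and> b \<in> VR"
begin

abbreviation layer_edges :: "('a \<times> 'b) set set" where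
  "layer_edges \<equiv> \<Union>x\<in>X. (`) (Pair x) ` ER"

lemma fst_image_link:
  assumes "e \<in> ET"
  shows "fst ` link e = e"
proof -
  obtain x y a b where "e = {x, y}" "link e = {(x, a), (y, b)}"
    using link[OF assms] by (elim exE conjE)
  then show ?thesis by simp
qed

lemma graph_blowup: "graph (X \<times> VR) (layer_edges \<union> link ` ET)"
  unfolding graph_def
proof (intro conjI ballI)
  show "finite (X \<times> VR)" using is_treeD(2)[OF tree_X] is_treeD(2)[OF tree_R] by simp
  fix e assume "e \<in> layer_edges \<union> link ` ET"
  then show "\<exists>p q. p \<in> X \<times> VR \<and> q \<in> X \<times> VR \<and> p \<noteq> q \<and> e = {p, q}"
  proof
    assume "e \<in> layer_edges"
    then obtain x f where "x \<in> X" "f \<in> ER" "e = Pair x ` f" by blast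
    moreover obtain a b where "a \<in> VR" "b \<in> VR" "a \<noteq> b" "f = {a, b}"
      using graph_edgeD[OF is_treeD(1)[OF tree_R] \<open>f \<in> ER\<close>] by blast
    ultimately show ?thesis by (intro exI[of _ "(x, a)"] exI[of _ "(x, b)"]) simp
  next
    assume "e \<in> link ` ET"
    then obtain f where f: "f \<in> ET" "e = link f" by blast
    obtain x y a b where xy: "f = {x, y}" "link f = {(x, a), (y, b)}" "a \<in> VR" "b \<in> VR"
      using link[OF f(1)] by (elim exE conjE)
    have "x \<in> X" "y \<in> X" "x \<noteq> y"
      using graph_doubleton_edgeD[OF is_treeD(1)[OF tree_X], of x y] f(1) xy(1) by simp_all
    with xy f(2) show ?thesis by (intro exI[of _ "(x, a)"] exI[of _ "(y, b)"]) simp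
  qed
qed

lemma card_blowup_edges: "card (layer_edges \<union> link ` ET) + 1 = card (X \<times> VR)"
proof -
  have gX: "graph X ET" and gR: "graph VR ER" using is_treeD(1) tree_X tree_R by auto
  have finX: "finite X" and finER: "finite ER" and finET: "finite ET"
    using is_treeD(2)[OF tree_X] graph_finite_edges[OF gR] graph_finite_edges[OF gX] .
  have card_layer: "card ((`) (Pair x) ` ER) = card ER" for x
    by (rule card_image) (simp add: inj_on_def inj_image_eq_iff)
  have layers_disjoint: "(`) (Pair x) ` ER \<inter> (`) (Pair y) ` ER = {}" if "x \<noteq> y" for x y
  proof -
    have "Pair x ` f \<noteq> Pair y ` f'" if "f \<in> ER" for f f'
    proof -
      obtain a b where "f = {a, b}" using graph_edgeD[OF gR \<open>f \<in> ER\<close>] by blast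
      with \<open>x \<noteq> y\<close> show ?thesis by auto
    qed
    then show ?thesis by blast
  qed
  have "card layer_edges = (\<Sum>x\<in>X. card ((`) (Pair x) ` ER))"
  proof (rule card_UN_disjoint[OF finX])
    show "\<forall>x\<in>X. finite ((`) (Pair x) ` ER)" using finER by simp
    show "\<forall>x\<in>X. \<forall>y\<in>X. x \<noteq> y \<longrightarrow> (`) (Pair x) ` ER \<inter> (`) (Pair y) ` ER = {}"
      by (intro ballI impI layers_disjoint)
  qed
  then have card_layers: "card layer_edges = card X * card ER" by (simp add: card_layer)
  have "inj_on link ET" by (rule inj_onI) (metis fst_image_link)
  then have card_links: "card (link ` ET) = card ET" by (rule card_image)
  have "layer_edges \<inter> link ` ET = {}"
  proof -
    have "Pair x ` f \<noteq> link e" if "f \<in> ER" "e \<in> ET" for x f e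
    proof
      assume "Pair x ` f = link e"
      then have "fst ` Pair x ` f = e" using fst_image_link[OF \<open>e \<in> ET\<close>] by simp
      moreover obtain a b where "f = {a, b}" using graph_edgeD[OF gR \<open>f \<in> ER\<close>] by blast
      ultimately have "e = {x}" by auto
      with graph_edge_ne_singleton[OF gX \<open>e \<in> ET\<close>] show False by blast
    qed
    then show ?thesis by blast
  qed
  moreover have "finite layer_edges" using finX finER by simp
  ultimately have "card (layer_edges \<union> link ` ET) = card X * card ER + card ET"
    using card_layers card_links finET by (simp add: card_Un_disjoint)
  moreover have "card VR = Suc (card ER)" using is_treeD(5)[OF tree_R] by simp
  then have "card (X \<times> VR) = card X + card X * card ER" by (simp add: card_cartesian_product)
  ultimately show ?thesis using is_treeD(5)[OF tree_X] by linarith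
qed

lemma blowup_path_within_layer:
  assumes "x \<in> X" "a \<in> VR" "b \<in> VR"
  shows "((x, a), (x, b)) \<in> (adj_rel (X \<times> VR) (layer_edges \<union> link ` ET))\<^sup>*"
proof -
  have "(a, b) \<in> (adj_rel VR ER)\<^sup>*"
    using is_treeD(4)[OF tree_R] assms(2,3) unfolding connected_graph_def by blast
  then show ?thesis
  proof (induction rule: rtrancl_induct)
    case (step c d)
    then have "((x, c), (x, d)) \<in> adj_rel (X \<times> VR) (layer_edges \<union> link ` ET)"
      using \<open>x \<in> X\<close> unfolding adj_rel_def by (auto intro!: UN_I[of x] image_eqI[of _ _ "{c, d}"])
    with step.IH show ?case by simp
  qed simp
qed

lemma blowup_path_across_link:
  assumes "(x, y) \<in> adj_rel X ET" "a \<in> VR" "b \<in> VR"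
  shows "((x, a), (y, b)) \<in> (adj_rel (X \<times> VR) (layer_edges \<union> link ` ET))\<^sup>*"
proof -
  have xy: "x \<in> X" "y \<in> X" "{x, y} \<in> ET" using assms(1) unfolding adj_rel_def by auto
  then obtain a' b' where ab': "a' \<in> VR" "b' \<in> VR" "link {x, y} = {(x, a'), (y, b')}"
    using link[OF xy(3)] by (auto simp: doubleton_eq_iff insert_commute)
  then have "((x, a'), (y, b')) \<in> adj_rel (X \<times> VR) (layer_edges \<union> link ` ET)"
    using xy unfolding adj_rel_def by auto
  then show ?thesis
    using blowup_path_within_layer[of x a a'] blowup_path_within_layer[of y b' b] xy ab' assms(2,3)
    by (meson rtrancl.rtrancl_into_rtrancl rtrancl_trans)
qed

lemma connected_blowup: "connected_graph (X \<times> VR) (layer_edges \<union> link ` ET)"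
  unfolding connected_graph_def
proof (intro ballI)
  let ?A = "adj_rel (X \<times> VR) (layer_edges \<union> link ` ET)"
  fix p q assume "p \<in> X \<times> VR" "q \<in> X \<times> VR"
  then obtain x a y b where pq: "p = (x, a)" "q = (y, b)" "x \<in> X" "a \<in> VR" "y \<in> X" "b \<in> VR"
    by auto
  have "(x, y) \<in> (adj_rel X ET)\<^sup>*" using is_treeD(4)[OF tree_X] pq unfolding connected_graph_def by blast
  then have "\<forall>b\<in>VR. ((x, a), (y, b)) \<in> ?A\<^sup>*"
  proof (induction rule: rtrancl_induct)
    case base
    then show ?case using blowup_path_within_layer pq by blast
  next
    case (step y z)
    show ?case
    proof
      fix b assume "b \<in> VR"
      have "((x, a), (y, a)) \<in> ?A\<^sup>*" using step.IH pq(4) by blast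
      then show "((x, a), (z, b)) \<in> ?A\<^sup>*"
        using blowup_path_across_link[OF step.hyps(2) pq(4) \<open>b \<in> VR\<close>] by (rule rtrancl_trans)
    qed
  qed
  then show "(p, q) \<in> ?A\<^sup>*" using pq by blast
qed

theorem is_tree_blowup: "is_tree (X \<times> VR) (layer_edges \<union> link ` ET)"
  using graph_blowup connected_blowup card_blowup_edges is_treeD(3) tree_X tree_R
  unfolding is_tree_def by auto

end

section \<open>Packings of Steiner trees\<close>

definition steiner_packing :: "'a set \<Rightarrow> 'a set set \<Rightarrow> 'a set \<Rightarrow> nat \<Rightarrow> bool" where
  "steiner_packing V E S m \<longleftrightarrow> (\<exists>T :: nat \<Rightarrow> 'a set \<times> 'a set set.
      (\<forall>i<m. steiner_tree V E S (fst (T i)) (snd (T i))) \<and>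
      (\<forall>i<m. \<forall>j<m. i \<noteq> j \<longrightarrow> snd (T i) \<inter> snd (T j) = {}))"

lemma lambda_S_eq_Max: "lambda_S V E S = Max {m. steiner_packing V E S m}"
  unfolding lambda_S_def steiner_packing_def by simp

lemma steiner_packing_0: "steiner_packing V E S 0"
  unfolding steiner_packing_def by simp

lemma steiner_packing_mono: "steiner_packing V E S m \<Longrightarrow> m' \<le> m \<Longrightarrow> steiner_packing V E S m'"
  unfolding steiner_packing_def by (meson less_le_trans)

lemma steiner_packingI:
  assumes "finite I"
    and trees: "\<And>i. i \<in> I \<Longrightarrow> steiner_tree V E S (VT i) (ET i)"
    and disjoint: "\<And>i j. i \<in> I \<Longrightarrow> j \<in> I \<Longrightarrow> i \<noteq> j \<Longrightarrow> ET i \<inter> ET j = {}"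
  shows "steiner_packing V E S (card I)"
proof -
  obtain h where h: "bij_betw h {..<card I} I"
    using ex_bij_betw_nat_finite[OF \<open>finite I\<close>] atLeast0LessThan by metis
  then have "h i \<in> I" if "i < card I" for i using that bij_betwE by blast
  moreover have "h i \<noteq> h j" if "i < card I" "j < card I" "i \<noteq> j" for i j
    using that bij_betw_imp_inj_on[OF h] by (simp add: inj_on_eq_iff)
  ultimately show ?thesis
    unfolding steiner_packing_def
    by (intro exI[of _ "\<lambda>i. (VT (h i), ET (h i))"]) (simp add: trees disjoint)
qed

lemma steiner_packing_disjoint_sum:
  assumes "finite I" "finite J"
    and "\<And>i. i \<in> I \<Longrightarrow> steiner_tree V E S (VT i) (ET i)"
    and "\<And>j. j \<in> J \<Longrightarrow> steiner_tree V E S (VT' j) (ET' j)"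
    and "\<And>i i'. i \<in> I \<Longrightarrow> i' \<in> I \<Longrightarrow> i \<noteq> i' \<Longrightarrow> ET i \<inter> ET i' = {}"
    and "\<And>j j'. j \<in> J \<Longrightarrow> j' \<in> J \<Longrightarrow> j \<noteq> j' \<Longrightarrow> ET' j \<inter> ET' j' = {}"
    and cross: "\<And>i j. i \<in> I \<Longrightarrow> j \<in> J \<Longrightarrow> ET i \<inter> ET' j = {}"
  shows "steiner_packing V E S (card I + card J)"
proof -
  have cross': "ET' j \<inter> ET i = {}" if "i \<in> I" "j \<in> J" for i j
    using cross[OF that] by (simp add: Int_commute)
  have "Inl ` I \<inter> Inr ` J = {}" by blast
  then have "card (Inl ` I \<union> Inr ` J) = card I + card J"
    using assms(1,2) by (simp add: card_Un_disjoint card_image)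
  moreover have "steiner_packing V E S (card (Inl ` I \<union> Inr ` J))"
  proof (rule steiner_packingI)
    show "finite (Inl ` I \<union> Inr ` J)" using assms(1,2) by simp
    show "steiner_tree V E S (case_sum VT VT' i) (case_sum ET ET' i)" if "i \<in> Inl ` I \<union> Inr ` J" for i
      using that assms(3,4) by auto
    show "case_sum ET ET' i \<inter> case_sum ET ET' i' = {}"
      if i: "i \<in> Inl ` I \<union> Inr ` J" and i': "i' \<in> Inl ` I \<union> Inr ` J" and "i \<noteq> i'" for i i'
    proof -
      consider (left) a b where "a \<in> I" "b \<in> I" "i = Inl a" "i' = Inl b"
        | (left_right) a b where "a \<in> I" "b \<in> J" "i = Inl a" "i' = Inr b"
        | (right_left) a b where "a \<in> J" "b \<in> I" "i = Inr a" "i' = Inl b"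
        | (right) a b where "a \<in> J" "b \<in> J" "i = Inr a" "i' = Inr b"
        using i i' by blast
      then show ?thesis
      proof cases
        case (left a b)
        with \<open>i \<noteq> i'\<close> show ?thesis using assms(5)[of a b] by simp
      next
        case (left_right a b)
        then show ?thesis using cross[of a b] by simp
      next
        case (right_left a b)
        then show ?thesis using cross'[of b a] by simp
      next
        case (right a b)
        with \<open>i \<noteq> i'\<close> show ?thesis using assms(6)[of a b] by simp
      qed
    qed
  qed
  ultimately show ?thesis by simp
qed

lemma steiner_tree_edges_nonempty:
  assumes "steiner_tree V E S VT ET" "2 \<le> card S"
  shows "ET \<noteq> {}"
proof
  assume "ET = {}"
  have tree: "is_tree VT ET" and "S \<subseteq> VT" using assms(1) unfolding steiner_tree_def by auto
  then have "card S \<le> card VT" using card_mono[OF is_treeD(2)[OF tree]] by blast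
  moreover have "card VT = 1" using is_treeD(5)[OF tree] \<open>ET = {}\<close> by simp
  ultimately show False using assms(2) by simp
qed

lemma steiner_packing_le_card_edges:
  assumes g: "graph V E" and "2 \<le> card S" and "steiner_packing V E S m"
  shows "m \<le> card E"
proof -
  obtain T where trees: "\<forall>i<m. steiner_tree V E S (fst (T i)) (snd (T i))"
    and disjoint: "\<forall>i<m. \<forall>j<m. i \<noteq> j \<longrightarrow> snd (T i) \<inter> snd (T j) = {}"
    using assms(3) unfolding steiner_packing_def by blast
  have sub: "snd (T i) \<subseteq> E" if "i < m" for i
    using trees that unfolding steiner_tree_def by blast
  have fin: "finite (snd (T i))" if "i < m" for i
    using sub[OF that] graph_finite_edges[OF g] by (rule finite_subset)
  have "m = (\<Sum>i<m. 1)" by simp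
  also have "\<dots> \<le> (\<Sum>i<m. card (snd (T i)))"
  proof (rule sum_mono)
    fix i assume "i \<in> {..<m}"
    then have "snd (T i) \<noteq> {}" using steiner_tree_edges_nonempty trees \<open>2 \<le> card S\<close> by blast
    with fin \<open>i \<in> {..<m}\<close> show "1 \<le> card (snd (T i))" by (simp add: Suc_leI card_gt_0_iff)
  qed
  also have "\<dots> = card (\<Union>i<m. snd (T i))"
    using fin disjoint by (intro card_UN_disjoint[symmetric]) auto
  also have "\<dots> \<le> card E"
    using sub graph_finite_edges[OF g] by (intro card_mono) auto
  finally show ?thesis .
qed

lemma finite_steiner_packing_sizes:
  "graph V E \<Longrightarrow> 2 \<le> card S \<Longrightarrow> finite {m. steiner_packing V E S m}"
  using steiner_packing_le_card_edges by (metis finite_nat_set_iff_bounded_le mem_Collect_eq)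

lemma steiner_packing_le_lambda_S:
  "graph V E \<Longrightarrow> 2 \<le> card S \<Longrightarrow> steiner_packing V E S m \<Longrightarrow> m \<le> lambda_S V E S"
  unfolding lambda_S_eq_Max by (simp add: finite_steiner_packing_sizes)

lemma steiner_packing_lambda_S:
  assumes "graph V E" "2 \<le> card S"
  shows "steiner_packing V E S (lambda_S V E S)"
proof -
  have "{m. steiner_packing V E S m} \<noteq> {}" using steiner_packing_0 by blast
  with finite_steiner_packing_sizes[OF assms] show ?thesis
    unfolding lambda_S_eq_Max using Max_in by blast
qed

lemma lambda_k_le_lambda_S:
  assumes "finite V" "S \<subseteq> V" "card S = n"
  shows "lambda_k n V E \<le> lambda_S V E S"
proof -
  have "finite {lambda_S V E S |S. S \<subseteq> V \<and> card S = n}"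
    using \<open>finite V\<close> by (simp add: setcompr_eq_image)
  then show ?thesis unfolding lambda_k_def using assms(2,3) by (auto intro: Min_le)
qed

lemma steiner_packing_lambda_k:
  assumes g: "graph V E" and "A \<subseteq> V" "card A = n" "2 \<le> n"
  shows "steiner_packing V E A (lambda_k n V E)"
proof -
  have "finite V" using g unfolding graph_def by blast
  then have "lambda_k n V E \<le> lambda_S V E A" using assms(2,3) by (rule lambda_k_le_lambda_S)
  with steiner_packing_lambda_S[OF g] assms(3,4) show ?thesis
    by (metis steiner_packing_mono)
qed

lemma ex_superset_with_card:
  assumes "finite V" "X \<subseteq> V" "card X \<le> n" "n \<le> card V"
  shows "\<exists>A. X \<subseteq> A \<and> A \<subseteq> V \<and> card A = n"
proof -
  have finX: "finite X" using finite_subset[OF assms(2,1)] .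
  have "n - card X \<le> card (V - X)" using assms by (simp add: card_Diff_subset finX)
  then obtain Y where Y: "Y \<subseteq> V - X" "card Y = n - card X"
    using obtain_subset_with_card_n by metis
  moreover have "finite Y" using Y(1) assms(1) finite_subset by blast
  moreover have "X \<inter> Y = {}" using Y(1) by blast
  ultimately have "card (X \<union> Y) = n" using finX assms(3) by (simp add: card_Un_disjoint)
  with Y(1) assms(2) show ?thesis by (intro exI[of _ "X \<union> Y"]) auto
qed

lemma connected_if_steiner_packing:
  assumes g: "graph V E" and "2 \<le> n" "n \<le> card V" "0 < N"
    and packing: "\<And>S. S \<subseteq> V \<Longrightarrow> card S = n \<Longrightarrow> steiner_packing V E S N"
  shows "connected_graph V E"
  unfolding connected_graph_def
proof (intro ballI)
  fix x y assume "x \<in> V" "y \<in> V"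
  have "finite V" using g unfolding graph_def by blast
  have "card {x, y} \<le> n" using \<open>2 \<le> n\<close> by (cases "x = y") auto
  moreover have "{x, y} \<subseteq> V" using \<open>x \<in> V\<close> \<open>y \<in> V\<close> by simp
  ultimately obtain A where A: "{x, y} \<subseteq> A" "A \<subseteq> V" "card A = n"
    using ex_superset_with_card[OF \<open>finite V\<close> _ _ \<open>n \<le> card V\<close>] by blast
  obtain T where "\<forall>i<N. steiner_tree V E A (fst (T i)) (snd (T i))"
    using packing[OF A(2,3)] unfolding steiner_packing_def by blast
  then have "steiner_tree V E A (fst (T 0)) (snd (T 0))" using \<open>0 < N\<close> by blast
  then have t: "is_tree (fst (T 0)) (snd (T 0))" "A \<subseteq> fst (T 0)" "fst (T 0) \<subseteq> V" "snd (T 0) \<subseteq> E"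
    unfolding steiner_tree_def by auto
  have "(x, y) \<in> (adj_rel (fst (T 0)) (snd (T 0)))\<^sup>*"
    using is_treeD(4)[OF t(1)] t(2) A(1) unfolding connected_graph_def by blast
  moreover have "adj_rel (fst (T 0)) (snd (T 0)) \<subseteq> adj_rel V E"
    using t(3,4) by (rule adj_rel_mono)
  ultimately show "(x, y) \<in> (adj_rel V E)\<^sup>*" using rtrancl_mono by blast
qed

lemma lambda_k_geI:
  assumes g: "graph V E" and "2 \<le> n" "n \<le> card V" "0 < N"
    and packing: "\<And>S. S \<subseteq> V \<Longrightarrow> card S = n \<Longrightarrow> steiner_packing V E S N"
  shows "N \<le> lambda_k n V E"
proof -
  have "finite V" using g unfolding graph_def by blast
  let ?L = "{lambda_S V E S |S. S \<subseteq> V \<and> card S = n}"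
  have "finite ?L" using \<open>finite V\<close> by (simp add: setcompr_eq_image)
  moreover obtain S0 where "S0 \<subseteq> V" "card S0 = n"
    using obtain_subset_with_card_n[OF \<open>n \<le> card V\<close>] by metis
  then have "?L \<noteq> {}" by blast
  moreover have "N \<le> lambda_S V E S" if "S \<subseteq> V" "card S = n" for S
    using steiner_packing_le_lambda_S[OF g _ packing[OF that]] that \<open>2 \<le> n\<close> by simp
  ultimately have "N \<le> Min ?L" by auto
  then show ?thesis
    using connected_if_steiner_packing[OF assms] unfolding lambda_k_def by simp
qed

lemma lambda_S_le_degree:
  assumes g: "graph V E" and "v \<in> S" "2 \<le> card S"
  shows "lambda_S V E S \<le> card {e \<in> E. v \<in> e}"
proof -
  obtain T where trees: "\<forall>i<lambda_S V E S. steiner_tree V E S (fst (T i)) (snd (T i))"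
    and disjoint: "\<forall>i<lambda_S V E S. \<forall>j<lambda_S V E S. i \<noteq> j \<longrightarrow> snd (T i) \<inter> snd (T j) = {}"
    using steiner_packing_lambda_S[OF g \<open>2 \<le> card S\<close>] unfolding steiner_packing_def by blast
  have "\<exists>e. e \<in> snd (T i) \<and> v \<in> e" if "i < lambda_S V E S" for i
  proof -
    have t: "is_tree (fst (T i)) (snd (T i))" "S \<subseteq> fst (T i)"
      using trees that unfolding steiner_tree_def by auto
    then have "2 \<le> card (fst (T i))" using card_mono[OF is_treeD(2)[OF t(1)] t(2)] \<open>2 \<le> card S\<close> by simp
    then obtain y where "{v, y} \<in> snd (T i)" using is_tree_neighbour[OF t(1)] t(2) \<open>v \<in> S\<close> by blast
    then show ?thesis by blast
  qed
  then obtain edge where edge: "edge i \<in> snd (T i)" "v \<in> edge i" if "i < lambda_S V E S" for i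
    by metis
  have "inj_on edge {..<lambda_S V E S}"
  proof (rule inj_onI)
    fix i j assume "i \<in> {..<lambda_S V E S}" "j \<in> {..<lambda_S V E S}" "edge i = edge j"
    with edge disjoint show "i = j" by (metis disjoint_iff lessThan_iff)
  qed
  then have "lambda_S V E S = card (edge ` {..<lambda_S V E S})" by (simp add: card_image)
  also have "\<dots> \<le> card {e \<in> E. v \<in> e}"
  proof (rule card_mono)
    show "finite {e \<in> E. v \<in> e}" using graph_finite_edges[OF g] by simp
    show "edge ` {..<lambda_S V E S} \<subseteq> {e \<in> E. v \<in> e}"
      using edge trees unfolding steiner_tree_def by auto
  qed
  finally show ?thesis .
qed

section \<open>Lifting trees of \<open>G\<close> to \<open>G \<circ> H\<close>\<close>

lemma lex_edges_crossI:
  "{u, u'} \<in> EG \<Longrightarrow> u \<in> VG \<Longrightarrow> u' \<in> VG \<Longrightarrow> v \<in> VH \<Longrightarrow> v' \<in> VH \<Longrightarrow>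
    {(u, v), (u', v')} \<in> lex_edges VG EG VH EH"
  unfolding lex_edges_def by blast

lemma lex_edges_fibreI:
  "u \<in> VG \<Longrightarrow> {v, v'} \<in> EH \<Longrightarrow> v \<in> VH \<Longrightarrow> v' \<in> VH \<Longrightarrow>
    {(u, v), (u, v')} \<in> lex_edges VG EG VH EH"
  unfolding lex_edges_def by blast

lemma graph_lex_edges:
  assumes gG: "graph VG EG" and gH: "graph VH EH"
  shows "graph (VG \<times> VH) (lex_edges VG EG VH EH)"
  unfolding graph_def
proof (intro conjI ballI)
  show "finite (VG \<times> VH)" using gG gH unfolding graph_def by simp
  fix e assume "e \<in> lex_edges VG EG VH EH"
  then obtain u v u' v' where e: "e = {(u, v), (u', v')}" "u \<in> VG" "u' \<in> VG" "v \<in> VH" "v' \<in> VH"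
    "{u, u'} \<in> EG \<or> (u = u' \<and> {v, v'} \<in> EH)" unfolding lex_edges_def by blast
  have "(u, v) \<noteq> (u', v')"
    using e(6) graph_doubleton_edgeD(3)[OF gG, of u u'] graph_doubleton_edgeD(3)[OF gH, of v v'] by auto
  with e show "\<exists>x y. x \<in> VG \<times> VH \<and> y \<in> VG \<times> VH \<and> x \<noteq> y \<and> e = {x, y}" by blast
qed

text \<open>The \<open>j\<close>-th copy of a tree \<open>(X, E)\<close> of \<open>G\<close> in \<open>G \<circ> H\<close>: the tree vertex \<open>x\<close> is lifted to
  \<open>(x, \<sigma> x j)\<close>, and each vertex \<open>s \<in> S\<close> missed by the lift is attached as a leaf to the lift of
  \<open>w (fst s)\<close>, a tree neighbour of \<open>fst s\<close>.\<close>

definition copy_vertices :: "('a \<times> 'b) set \<Rightarrow> ('a \<Rightarrow> 'b \<Rightarrow> 'b) \<Rightarrow> 'a set \<Rightarrow> 'b \<Rightarrow> ('a \<times> 'b) set" where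
  "copy_vertices S \<sigma> X j = (\<lambda>x. (x, \<sigma> x j)) ` X \<union> {s \<in> S. \<sigma> (fst s) j \<noteq> snd s}"

definition copy_edges ::
    "('a \<times> 'b) set \<Rightarrow> ('a \<Rightarrow> 'b \<Rightarrow> 'b) \<Rightarrow> ('a \<Rightarrow> 'a) \<Rightarrow> 'a set set \<Rightarrow> 'b \<Rightarrow> ('a \<times> 'b) set set" where
  "copy_edges S \<sigma> w E j = (`) (\<lambda>x. (x, \<sigma> x j)) ` E \<union>
     (\<lambda>s. {s, (w (fst s), \<sigma> (w (fst s)) j)}) ` {s \<in> S. \<sigma> (fst s) j \<noteq> snd s}"

locale tree_copies =
  fixes VG :: "'a set" and EG and VH :: "'b set" and EH :: "'b set set" and S X E \<sigma> w
  assumes tree: "is_tree X E" and X_subset: "X \<subseteq> VG" and E_subset: "E \<subseteq> EG"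
    and S_subset: "S \<subseteq> VG \<times> VH" and finite_S: "finite S" and fst_S_subset: "fst ` S \<subseteq> X"
    and neighbour: "\<And>x. x \<in> fst ` S \<Longrightarrow> {x, w x} \<in> E"
    and bij: "\<And>x. x \<in> X \<Longrightarrow> bij_betw (\<sigma> x) VH VH"
begin

lemma graph_tree: "graph X E" using is_treeD(1)[OF tree] .

lemma neighbour_in_tree:
  assumes "x \<in> fst ` S"
  shows "w x \<in> X" "w x \<noteq> x"
  using graph_doubleton_edgeD[OF graph_tree neighbour[OF assms]] by auto

lemma twist_in_VH: "x \<in> X \<Longrightarrow> j \<in> VH \<Longrightarrow> \<sigma> x j \<in> VH"
  using bij_betwE[OF bij] by blast

lemma twist_inj:
  assumes "x \<in> X" "j \<in> VH" "j' \<in> VH" "\<sigma> x j = \<sigma> x j'"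
  shows "j = j'"
  using bij_betw_imp_inj_on[OF bij[OF assms(1)]] assms(2-4) by (simp add: inj_on_eq_iff)

lemma copy_edge_cases:
  assumes "e \<in> copy_edges S \<sigma> w E j"
  obtains (lifted) e' where "e' \<in> E" "e = (\<lambda>x. (x, \<sigma> x j)) ` e'"
    | (leaf) s where "s \<in> S" "\<sigma> (fst s) j \<noteq> snd s" "e = {s, (w (fst s), \<sigma> (w (fst s)) j)}"
  using assms unfolding copy_edges_def by blast

lemma copy_edges_subset_lex:
  assumes "j \<in> VH" "e \<in> copy_edges S \<sigma> w E j"
  shows "e \<in> lex_edges VG EG VH EH"
  using assms(2)
proof (cases rule: copy_edge_cases)
  case (lifted e')
  then obtain x y where "x \<in> X" "y \<in> X" "e' = {x, y}" using graph_edgeD[OF graph_tree] by blast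
  with lifted X_subset E_subset twist_in_VH[OF _ assms(1)] show ?thesis
    by (auto intro!: lex_edges_crossI)
next
  case (leaf s)
  obtain u v where uv: "s = (u, v)" by fastforce
  with leaf(1) have u: "u \<in> fst ` S" by force
  then have "w u \<in> VG" "\<sigma> (w u) j \<in> VH"
    using neighbour_in_tree(1) X_subset twist_in_VH[OF _ assms(1)] by auto
  moreover have "{u, w u} \<in> EG" using neighbour[OF u] E_subset by blast
  moreover have "u \<in> VG" "v \<in> VH" using S_subset leaf(1) uv by auto
  ultimately show ?thesis using leaf(3) uv by (auto intro!: lex_edges_crossI)
qed

lemma copy_steiner_tree:
  assumes "j \<in> VH"
  shows "steiner_tree (VG \<times> VH) (lex_edges VG EG VH EH) S (copy_vertices S \<sigma> X j) (copy_edges S \<sigma> w E j)"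
proof -
  let ?f = "\<lambda>x. (x, \<sigma> x j)"
  let ?P = "{s \<in> S. \<sigma> (fst s) j \<noteq> snd s}"
  have "inj_on ?f X" by (rule inj_onI) simp
  then have "is_tree (?f ` X) ((`) ?f ` E)" by (rule is_tree_image[OF tree])
  moreover have "?P \<inter> ?f ` X = {}" by auto
  moreover have "?f (w (fst p)) \<in> ?f ` X" if "p \<in> ?P" for p
    using neighbour_in_tree that by auto
  ultimately have "is_tree (copy_vertices S \<sigma> X j) (copy_edges S \<sigma> w E j)"
    unfolding copy_vertices_def copy_edges_def using finite_S by (intro is_tree_add_leaves) auto
  moreover have "S \<subseteq> copy_vertices S \<sigma> X j"
  proof
    fix s assume "s \<in> S"
    show "s \<in> copy_vertices S \<sigma> X j"
    proof (cases "\<sigma> (fst s) j = snd s")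
      case True
      then have "s = ?f (fst s)" by (metis prod.collapse)
      with fst_S_subset \<open>s \<in> S\<close> show ?thesis unfolding copy_vertices_def by blast
    qed (use \<open>s \<in> S\<close> in \<open>simp add: copy_vertices_def\<close>)
  qed
  moreover have "copy_vertices S \<sigma> X j \<subseteq> VG \<times> VH"
    unfolding copy_vertices_def using X_subset S_subset twist_in_VH assms by auto
  moreover have "copy_edges S \<sigma> w E j \<subseteq> lex_edges VG EG VH EH"
    using copy_edges_subset_lex[OF assms] by blast
  ultimately show ?thesis unfolding steiner_tree_def by blast
qed

lemma fst_image_copy_edge:
  assumes "e \<in> copy_edges S \<sigma> w E j"
  shows "fst ` e \<in> E"
  using assms
proof (cases rule: copy_edge_cases)
  case (lifted e')
  then show ?thesis by (simp add: image_image)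
next
  case (leaf s)
  then show ?thesis using neighbour[of "fst s"] by simp
qed

lemma link_not_copy_edge:
  assumes "x \<noteq> y"
    and "(x, a) \<in> S \<longrightarrow> w x \<noteq> y" and "(y, b) \<in> S \<longrightarrow> w y \<noteq> x"
    and "\<not> (\<sigma> x j = a \<and> \<sigma> y j = b)"
  shows "{(x, a), (y, b)} \<notin> copy_edges S \<sigma> w E j"
proof
  assume "{(x, a), (y, b)} \<in> copy_edges S \<sigma> w E j"
  then show False
  proof (cases rule: copy_edge_cases)
    case (lifted e')
    then obtain z z' where "e' = {z, z'}" using graph_edgeD[OF graph_tree] by blast
    with lifted(2) assms(4) show False by (auto simp: doubleton_eq_iff)
  next
    case (leaf s)
    with assms(2,3) show False by (auto simp: doubleton_eq_iff)
  qed
qed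

lemma copy_vertex_unique:
  "x \<in> X \<Longrightarrow> j \<in> VH \<Longrightarrow> j' \<in> VH \<Longrightarrow> (x, \<sigma> x j) = (y, \<sigma> y j') \<Longrightarrow> j = j'"
  using twist_inj by auto

lemma copy_edge_shape:
  assumes "e \<in> copy_edges S \<sigma> w E j"
  shows "\<exists>x\<in>X. \<exists>q. e = {(x, \<sigma> x j), q} \<and> ((\<exists>y\<in>X. q = (y, \<sigma> y j)) \<or> (q \<in> S \<and> x = w (fst q)))"
  using assms
proof (cases rule: copy_edge_cases)
  case (lifted e')
  then obtain x y where "x \<in> X" "y \<in> X" "e' = {x, y}" using graph_edgeD[OF graph_tree] by blast
  with lifted show ?thesis by auto
next
  case (leaf s)
  with neighbour_in_tree[of "fst s"] show ?thesis
    by (intro bexI[of _ "w (fst s)"] exI[of _ s]) (auto simp: insert_commute)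
qed

text \<open>Two copies can only share an edge joining two leaves \<open>s, s'\<close> whose columns are mutual
  neighbours, each leaf lying on the other copy; the last assumption rules this out.\<close>

lemma copy_edges_disjoint:
  assumes j: "j \<in> VH" "j' \<in> VH" "j \<noteq> j'"
    and no_shared_leaves: "\<And>s s'. s \<in> S \<Longrightarrow> s' \<in> S \<Longrightarrow> w (fst s) = fst s' \<Longrightarrow> w (fst s') = fst s \<Longrightarrow>
             \<sigma> (fst s) j' = snd s \<Longrightarrow> \<sigma> (fst s') j = snd s' \<Longrightarrow> False"
  shows "copy_edges S \<sigma> w E j \<inter> copy_edges S \<sigma> w E j' = {}"
proof (rule ccontr)
  assume "copy_edges S \<sigma> w E j \<inter> copy_edges S \<sigma> w E j' \<noteq> {}"
  then obtain e where e: "e \<in> copy_edges S \<sigma> w E j" "e \<in> copy_edges S \<sigma> w E j'" by blast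
  obtain x q where xq: "x \<in> X" "e = {(x, \<sigma> x j), q}"
    "(\<exists>y\<in>X. q = (y, \<sigma> y j)) \<or> (q \<in> S \<and> x = w (fst q))"
    using copy_edge_shape[OF e(1)] by blast
  obtain x' q' where xq': "x' \<in> X" "e = {(x', \<sigma> x' j'), q'}"
    "(\<exists>y\<in>X. q' = (y, \<sigma> y j')) \<or> (q' \<in> S \<and> x' = w (fst q'))"
    using copy_edge_shape[OF e(2)] by blast
  have unique: False if "x \<in> X" "(x, \<sigma> x j) = (y, \<sigma> y j')" for x y
    using copy_vertex_unique[OF that(1) j(1,2) that(2)] j(3) by simp
  have "{(x, \<sigma> x j), q} = {(x', \<sigma> x' j'), q'}" using xq(2) xq'(2) by simp
  then consider "(x, \<sigma> x j) = (x', \<sigma> x' j')" | "(x, \<sigma> x j) = q'" "q = (x', \<sigma> x' j')"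
    unfolding doubleton_eq_iff by blast
  then show False
  proof cases
    case 1
    with xq(1) show False by (rule unique)
  next
    case 2
    show False
    proof (cases "\<exists>y\<in>X. q = (y, \<sigma> y j)")
      case True
      then obtain y where "y \<in> X" "(y, \<sigma> y j) = (x', \<sigma> x' j')" using 2(2) by auto
      then show False by (rule unique)
    next
      case q_leaf: False
      show False
      proof (cases "\<exists>y\<in>X. q' = (y, \<sigma> y j')")
        case True
        then obtain y where "(x, \<sigma> x j) = (y, \<sigma> y j')" using 2(1) by auto
        with xq(1) show False by (rule unique)
      next
        case False
        then have q': "q' \<in> S" "x' = w (fst q')" using xq'(3) by blast+
        have q: "q \<in> S" "x = w (fst q)" using q_leaf xq(3) by blast+
        have "fst q' = x" "snd q' = \<sigma> x j" "fst q = x'" "snd q = \<sigma> x' j'" using 2 by auto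
        with q q' show False using no_shared_leaves[of q q'] by simp
      qed
    qed
  qed
qed

end

section \<open>Packings for a fixed terminal set\<close>

locale lex_packing_setting =
  fixes VG :: "'a set" and EG :: "'a set set" and VH :: "'b set" and EH :: "'b set set"
    and S :: "('a \<times> 'b) set" and B :: "'b set"
    and k :: nat and TV :: "nat \<Rightarrow> 'a set" and TE :: "nat \<Rightarrow> 'a set set"
    and l :: nat and RV :: "nat \<Rightarrow> 'b set" and RE :: "nat \<Rightarrow> 'b set set"
  assumes graph_H: "graph VH EH"
    and S_subset: "S \<subseteq> VG \<times> VH" and card_S: "card S = 3"
    and B_subset: "B \<subseteq> VH" and card_B: "card B = 3" and snd_S_subset: "snd ` S \<subseteq> B"
    and T_steiner: "\<And>t. t < k \<Longrightarrow> steiner_tree VG EG (fst ` S) (TV t) (TE t)"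
    and T_card: "\<And>t. t < k \<Longrightarrow> 3 \<le> card (TV t)"
    and T_disjoint: "\<And>t t'. t < k \<Longrightarrow> t' < k \<Longrightarrow> t \<noteq> t' \<Longrightarrow> TE t \<inter> TE t' = {}"
    and R_steiner: "\<And>p. p < l \<Longrightarrow> steiner_tree VH EH B (RV p) (RE p)"
    and R_disjoint: "\<And>p p'. p < l \<Longrightarrow> p' < l \<Longrightarrow> p \<noteq> p' \<Longrightarrow> RE p \<inter> RE p' = {}"
    and k_pos: "0 < k"
begin

lemma finite_S: "finite S"
  using card_S card.infinite by fastforce

lemma finite_VH: "finite VH"
  using graph_H unfolding graph_def by blast

lemma T_tree:
  assumes "t < k"
  shows "is_tree (TV t) (TE t)" "graph (TV t) (TE t)" "TV t \<subseteq> VG" "TE t \<subseteq> EG" "fst ` S \<subseteq> TV t"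
  using T_steiner[OF assms] unfolding steiner_tree_def by (auto dest: is_treeD(1))

lemma R_tree:
  assumes "p < l"
  shows "is_tree (RV p) (RE p)" "graph (RV p) (RE p)" "RV p \<subseteq> VH" "RE p \<subseteq> EH" "B \<subseteq> RV p"
  using R_steiner[OF assms] unfolding steiner_tree_def by (auto dest: is_treeD(1))

lemma card_RV:
  assumes "p < l"
  shows "3 \<le> card (RV p)"
  using card_mono[OF is_treeD(2)[OF R_tree(1)[OF assms]] R_tree(5)[OF assms]] card_B by simp

definition T_nbr :: "nat \<Rightarrow> 'a \<Rightarrow> 'a" where
  "T_nbr t x = (SOME y. {x, y} \<in> TE t)"

definition R_nbr :: "nat \<Rightarrow> 'b \<Rightarrow> 'b" where
  "R_nbr p b = (SOME y. {b, y} \<in> RE p)"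

lemma T_nbr:
  assumes "t < k" "x \<in> fst ` S"
  shows "{x, T_nbr t x} \<in> TE t"
proof -
  have "x \<in> TV t" using T_tree(5)[OF assms(1)] assms(2) by blast
  moreover have "2 \<le> card (TV t)" using T_card[OF assms(1)] by simp
  ultimately obtain y where "{x, y} \<in> TE t" by (rule is_tree_neighbour[OF T_tree(1)[OF assms(1)]])
  then show ?thesis unfolding T_nbr_def by (rule someI)
qed

lemma T_nbr_ne: "t < k \<Longrightarrow> x \<in> fst ` S \<Longrightarrow> T_nbr t x \<noteq> x"
  using graph_doubleton_edgeD(3)[OF T_tree(2) T_nbr] by fastforce

lemma R_nbr:
  assumes "p < l" "b \<in> B"
  shows "{b, R_nbr p b} \<in> RE p"
proof -
  have "b \<in> RV p" using R_tree(5)[OF assms(1)] assms(2) by blast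
  moreover have "2 \<le> card (RV p)" using card_RV[OF assms(1)] by simp
  ultimately obtain y where "{b, y} \<in> RE p" by (rule is_tree_neighbour[OF R_tree(1)[OF assms(1)]])
  then show ?thesis unfolding R_nbr_def by (rule someI)
qed

lemma R_nbr_ne: "p < l \<Longrightarrow> b \<in> B \<Longrightarrow> R_nbr p b \<noteq> b"
  using graph_doubleton_edgeD(3)[OF R_tree(2) R_nbr] by fastforce

lemma R_nbr_in_RV: "p < l \<Longrightarrow> b \<in> B \<Longrightarrow> R_nbr p b \<in> RV p"
  using graph_doubleton_edgeD(2)[OF R_tree(2) R_nbr] by simp

text \<open>\<open>w t\<close> chooses a neighbour in \<open>T\<^sub>t\<close> for every column of \<open>S\<close>, and \<open>\<sigma> t\<close> twists the copies of
  \<open>T\<^sub>t\<close>; the last clause is the hypothesis of \<open>tree_copies.copy_edges_disjoint\<close>.\<close>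

definition admissible :: "(nat \<Rightarrow> 'a \<Rightarrow> 'b \<Rightarrow> 'b) \<Rightarrow> (nat \<Rightarrow> 'a \<Rightarrow> 'a) \<Rightarrow> bool" where
  "admissible \<sigma> w \<longleftrightarrow> (\<forall>t<k. (\<forall>x\<in>fst ` S. {x, w t x} \<in> TE t) \<and> (\<forall>x\<in>TV t. bij_betw (\<sigma> t x) VH VH) \<and>
     (\<forall>s\<in>S. \<forall>s'\<in>S. \<forall>j\<in>VH. \<forall>j'\<in>VH. w t (fst s) = fst s' \<longrightarrow> w t (fst s') = fst s \<longrightarrow>
        \<sigma> t (fst s) j' = snd s \<longrightarrow> \<sigma> t (fst s') j = snd s' \<longrightarrow> j = j'))"

lemma admissibleI:
  assumes "\<And>t x. t < k \<Longrightarrow> x \<in> fst ` S \<Longrightarrow> {x, w t x} \<in> TE t"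
    and "\<And>t x. t < k \<Longrightarrow> x \<in> TV t \<Longrightarrow> bij_betw (\<sigma> t x) VH VH"
    and "\<And>t s s' j j'. t < k \<Longrightarrow> s \<in> S \<Longrightarrow> s' \<in> S \<Longrightarrow> j \<in> VH \<Longrightarrow> j' \<in> VH \<Longrightarrow>
      w t (fst s) = fst s' \<Longrightarrow> w t (fst s') = fst s \<Longrightarrow> \<sigma> t (fst s) j' = snd s \<Longrightarrow> \<sigma> t (fst s') j = snd s' \<Longrightarrow>
      j = j'"
  shows "admissible \<sigma> w"
  unfolding admissible_def using assms by (intro allI impI conjI ballI) auto

lemma tree_copies_T:
  assumes "admissible \<sigma> w" "t < k"
  shows "tree_copies VG EG VH S (TV t) (TE t) (\<sigma> t) (w t)"
proof -
  have "\<And>x. x \<in> fst ` S \<Longrightarrow> {x, w t x} \<in> TE t" "\<And>x. x \<in> TV t \<Longrightarrow> bij_betw (\<sigma> t x) VH VH"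
    using assms unfolding admissible_def by blast+
  with T_tree[OF assms(2)] S_subset finite_S show ?thesis
    by unfold_locales
qed

lemma copy_edges_disjoint_copies:
  assumes adm: "admissible \<sigma> w" and "t < k" "t' < k" "j \<in> VH" "j' \<in> VH" "(t, j) \<noteq> (t', j')"
  shows "copy_edges S (\<sigma> t) (w t) (TE t) j \<inter> copy_edges S (\<sigma> t') (w t') (TE t') j' = {}"
proof (cases "t = t'")
  case True
  interpret tree_copies VG EG VH EH S "TV t" "TE t" "\<sigma> t" "w t"
    using tree_copies_T[OF adm \<open>t < k\<close>] .
  have "j \<noteq> j'" using True assms(6) by simp
  have "copy_edges S (\<sigma> t) (w t) (TE t) j \<inter> copy_edges S (\<sigma> t) (w t) (TE t) j' = {}"
  proof (rule copy_edges_disjoint[OF \<open>j \<in> VH\<close> \<open>j' \<in> VH\<close> \<open>j \<noteq> j'\<close>])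
    fix s s' assume "s \<in> S" "s' \<in> S" "w t (fst s) = fst s'" "w t (fst s') = fst s"
      "\<sigma> t (fst s) j' = snd s" "\<sigma> t (fst s') j = snd s'"
    with adm \<open>t < k\<close> \<open>j \<in> VH\<close> \<open>j' \<in> VH\<close> have "j = j'" unfolding admissible_def by blast
    with \<open>j \<noteq> j'\<close> show False ..
  qed
  with True show ?thesis by simp
next
  case False
  interpret c: tree_copies VG EG VH EH S "TV t" "TE t" "\<sigma> t" "w t"
    using tree_copies_T[OF adm \<open>t < k\<close>] .
  interpret c': tree_copies VG EG VH EH S "TV t'" "TE t'" "\<sigma> t'" "w t'"
    using tree_copies_T[OF adm \<open>t' < k\<close>] .
  have False if "e \<in> copy_edges S (\<sigma> t) (w t) (TE t) j" "e \<in> copy_edges S (\<sigma> t') (w t') (TE t') j'" for e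
  proof -
    have "fst ` e \<in> TE t \<inter> TE t'"
      using c.fst_image_copy_edge[OF that(1)] c'.fst_image_copy_edge[OF that(2)] by simp
    with T_disjoint[OF \<open>t < k\<close> \<open>t' < k\<close> False] show False by simp
  qed
  then show ?thesis by blast
qed

lemma steiner_packing_from_copies:
  assumes adm: "admissible \<sigma> w"
    and extra_trees: "\<And>p. p < l \<Longrightarrow> steiner_tree (VG \<times> VH) (lex_edges VG EG VH EH) S (XV p) (XE p)"
    and extra_disjoint: "\<And>p p'. p < l \<Longrightarrow> p' < l \<Longrightarrow> p \<noteq> p' \<Longrightarrow> XE p \<inter> XE p' = {}"
    and copies_extra_disjoint:
      "\<And>t j p. t < k \<Longrightarrow> j \<in> VH \<Longrightarrow> p < l \<Longrightarrow> copy_edges S (\<sigma> t) (w t) (TE t) j \<inter> XE p = {}"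
  shows "steiner_packing (VG \<times> VH) (lex_edges VG EG VH EH) S (k * card VH + l)"
proof -
  have "steiner_packing (VG \<times> VH) (lex_edges VG EG VH EH) S (card ({..<k} \<times> VH) + card {..<l})"
  proof (rule steiner_packing_disjoint_sum)
    show "finite ({..<k} \<times> VH)" "finite {..<l}" using finite_VH by simp_all
    show "steiner_tree (VG \<times> VH) (lex_edges VG EG VH EH) S
        ((\<lambda>(t, j). copy_vertices S (\<sigma> t) (TV t) j) i) ((\<lambda>(t, j). copy_edges S (\<sigma> t) (w t) (TE t) j) i)"
      if "i \<in> {..<k} \<times> VH" for i
      using that tree_copies.copy_steiner_tree[OF tree_copies_T[OF adm]] by auto
    show "(\<lambda>(t, j). copy_edges S (\<sigma> t) (w t) (TE t) j) i \<inter> (\<lambda>(t, j). copy_edges S (\<sigma> t) (w t) (TE t) j) i' = {}"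
      if "i \<in> {..<k} \<times> VH" "i' \<in> {..<k} \<times> VH" "i \<noteq> i'" for i i'
    proof -
      obtain t j t' j' where "i = (t, j)" "i' = (t', j')" by fastforce
      with that show ?thesis using copy_edges_disjoint_copies[OF adm, of t t' j j'] by simp
    qed
    show "(\<lambda>(t, j). copy_edges S (\<sigma> t) (w t) (TE t) j) i \<inter> XE p = {}"
      if "i \<in> {..<k} \<times> VH" "p \<in> {..<l}" for i p
      using that copies_extra_disjoint by auto
  qed (use extra_trees extra_disjoint in auto)
  then show ?thesis by (simp add: card_cartesian_product)
qed

end

context lex_packing_setting
begin

text \<open>A sufficient condition for the edge \<open>{(x, a), (y, b)}\<close> over an edge \<open>{x, y}\<close> of \<open>T\<^sub>0\<close> to lie in
  no copy of \<open>T\<^sub>0\<close>.\<close>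

definition link_ok :: "(nat \<Rightarrow> 'a \<Rightarrow> 'b \<Rightarrow> 'b) \<Rightarrow> (nat \<Rightarrow> 'a \<Rightarrow> 'a) \<Rightarrow> 'a \<Rightarrow> 'a \<Rightarrow> 'b \<Rightarrow> 'b \<Rightarrow> bool" where
  "link_ok \<sigma> w x y a b \<longleftrightarrow> ((x, a) \<in> S \<longrightarrow> w 0 x \<noteq> y) \<and> ((y, b) \<in> S \<longrightarrow> w 0 y \<noteq> x) \<and>
     (\<forall>j\<in>VH. \<not> (\<sigma> 0 x j = a \<and> \<sigma> 0 y j = b))"

lemma copy_edge_not_vertical:
  assumes "admissible \<sigma> w" "t < k" "e \<in> copy_edges S (\<sigma> t) (w t) (TE t) j"
  shows "fst ` e \<noteq> {x}"
  using graph_edge_ne_singleton[OF T_tree(2)[OF assms(2)]]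
    tree_copies.fst_image_copy_edge[OF tree_copies_T[OF assms(1,2)] assms(3)] by blast

lemma fibre_steiner_tree:
  assumes "fst ` S \<subseteq> {u}" "u \<in> VG" "p < l"
  shows "steiner_tree (VG \<times> VH) (lex_edges VG EG VH EH) S (Pair u ` RV p) ((`) (Pair u) ` RE p)"
proof -
  have "inj_on (Pair u) (RV p)" by (simp add: inj_on_def)
  then have "is_tree (Pair u ` RV p) ((`) (Pair u) ` RE p)" by (rule is_tree_image[OF R_tree(1)[OF \<open>p < l\<close>]])
  moreover have "S \<subseteq> Pair u ` RV p"
  proof
    fix s assume "s \<in> S"
    then have "fst s = u" "snd s \<in> RV p" using assms(1) snd_S_subset R_tree(5)[OF \<open>p < l\<close>] by auto
    then show "s \<in> Pair u ` RV p" by (metis imageI prod.collapse)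
  qed
  moreover have "Pair u ` RV p \<subseteq> VG \<times> VH" using \<open>u \<in> VG\<close> R_tree(3)[OF \<open>p < l\<close>] by auto
  moreover have "(`) (Pair u) ` RE p \<subseteq> lex_edges VG EG VH EH"
  proof
    fix e assume "e \<in> (`) (Pair u) ` RE p"
    then obtain a b where "a \<in> RV p" "b \<in> RV p" "{a, b} \<in> RE p" "e = {(u, a), (u, b)}"
      using graph_edgeD[OF R_tree(2)[OF \<open>p < l\<close>]] by force
    with R_tree(3,4)[OF \<open>p < l\<close>] \<open>u \<in> VG\<close> show "e \<in> lex_edges VG EG VH EH"
      by (auto intro!: lex_edges_fibreI)
  qed
  ultimately show ?thesis unfolding steiner_tree_def by blast
qed

lemma packing_single_column:
  assumes "fst ` S \<subseteq> {u}"
  shows "steiner_packing (VG \<times> VH) (lex_edges VG EG VH EH) S (k * card VH + l)"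
proof -
  have adm: "admissible (\<lambda>t x j. j) T_nbr"
  proof (rule admissibleI)
    fix t s s' j j' assume "t < k" "s \<in> S" "s' \<in> S" "T_nbr t (fst s) = fst s'"
    with assms T_nbr_ne[OF \<open>t < k\<close>, of "fst s"] show "j = j'" by auto
  qed (auto simp: T_nbr bij_betw_def)
  have "S \<noteq> {}" using card_S by auto
  then obtain s0 where "s0 \<in> S" by blast
  then have "fst s0 = u" "fst s0 \<in> VG" using assms S_subset by auto
  then have "u \<in> VG" by simp
  show ?thesis
  proof (rule steiner_packing_from_copies[OF adm])
    show "steiner_tree (VG \<times> VH) (lex_edges VG EG VH EH) S (Pair u ` RV p) ((`) (Pair u) ` RE p)"
      if "p < l" for p
      using fibre_steiner_tree[OF assms \<open>u \<in> VG\<close> that] .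
    show "(`) (Pair u) ` RE p \<inter> (`) (Pair u) ` RE p' = {}" if "p < l" "p' < l" "p \<noteq> p'" for p p'
      using R_disjoint[OF that] by (auto simp: inj_image_eq_iff inj_on_def)
    have "fst ` Pair u ` f = {u}" if "p < l" "f \<in> RE p" for p f
      using graph_edgeD[OF R_tree(2) that(2)] that(1) by auto
    then show "copy_edges S ((\<lambda>t x j. j) t) (T_nbr t) (TE t) j \<inter> (`) (Pair u) ` RE p = {}"
      if "t < k" "j \<in> VH" "p < l" for t j p
      using copy_edge_not_vertical[OF adm \<open>t < k\<close>] that(3) by blast
  qed
qed

end

locale lex_packing_blowup = lex_packing_setting +
  fixes src tgt :: "'a set \<Rightarrow> 'a" and hub :: "'a set \<Rightarrow> 'b" and foot :: "nat \<Rightarrow> 'a set \<Rightarrow> 'b"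
  assumes ends: "\<And>e. e \<in> TE 0 \<Longrightarrow> e = {src e, tgt e}"
    and hub_in_B: "\<And>e. e \<in> TE 0 \<Longrightarrow> hub e \<in> B"
    and foot_in_RV: "\<And>p e. p < l \<Longrightarrow> e \<in> TE 0 \<Longrightarrow> foot p e \<in> RV p"
begin

text \<open>The links of an edge for different \<open>p\<close> all end next to the same vertex
  \<open>hub e\<close>, so that they cannot coincide.\<close>

definition link :: "nat \<Rightarrow> 'a set \<Rightarrow> ('a \<times> 'b) set" where
  "link p e = {(src e, foot p e), (tgt e, R_nbr p (hub e))}"

definition blowup_edges :: "nat \<Rightarrow> ('a \<times> 'b) set set" where
  "blowup_edges p = (\<Union>x\<in>TV 0. (`) (Pair x) ` RE p) \<union> link p ` TE 0"

lemma src_ne_tgt: "e \<in> TE 0 \<Longrightarrow> src e \<noteq> tgt e"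
  using graph_doubleton_edgeD(3)[OF T_tree(2)[OF k_pos]] ends by metis

lemma fst_image_link: "e \<in> TE 0 \<Longrightarrow> fst ` link p e = e"
  using ends unfolding link_def by auto

lemma blowup_steiner_tree:
  assumes "p < l"
  shows "steiner_tree (VG \<times> VH) (lex_edges VG EG VH EH) S (TV 0 \<times> RV p) (blowup_edges p)"
proof -
  note T0 = T_tree[OF k_pos] and R = R_tree[OF assms]
  have link_shape: "\<exists>x y a b. e = {x, y} \<and> link p e = {(x, a), (y, b)} \<and> a \<in> RV p \<and> b \<in> RV p"
    if "e \<in> TE 0" for e
    using ends[OF that] foot_in_RV[OF assms that] R_nbr_in_RV[OF assms hub_in_B[OF that]]
    unfolding link_def by blast
  have "is_tree (TV 0 \<times> RV p) (blowup_edges p)"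
    unfolding blowup_edges_def using T0(1) R(1) link_shape by (rule tree_blowup.is_tree_blowup[OF tree_blowup.intro])
  moreover have "S \<subseteq> TV 0 \<times> RV p" using T0(5) snd_S_subset R(5) by force
  moreover have "TV 0 \<times> RV p \<subseteq> VG \<times> VH" using T0(3) R(3) by auto
  moreover have "blowup_edges p \<subseteq> lex_edges VG EG VH EH"
  proof
    fix e assume "e \<in> blowup_edges p"
    then consider (layer) x f where "x \<in> TV 0" "f \<in> RE p" "e = Pair x ` f"
      | (link) e' where "e' \<in> TE 0" "e = link p e'"
      unfolding blowup_edges_def by blast
    then show "e \<in> lex_edges VG EG VH EH"
    proof cases
      case layer
      then obtain a b where "a \<in> RV p" "b \<in> RV p" "{a, b} \<in> RE p" "e = {(x, a), (x, b)}"
        using graph_edgeD[OF R(2)] by force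
      with layer(1) T0(3) R(3,4) show ?thesis by (auto intro!: lex_edges_fibreI)
    next
      case link
      have "{src e', tgt e'} \<in> EG" using ends[OF link(1)] link(1) T0(4) by auto
      moreover have "src e' \<in> VG" "tgt e' \<in> VG"
        using graph_doubleton_edgeD(1,2)[OF T0(2)] ends[OF link(1)] link(1) T0(3) by (metis subsetD)+
      moreover have "foot p e' \<in> VH" "R_nbr p (hub e') \<in> VH"
        using foot_in_RV[OF assms link(1)] R_nbr_in_RV[OF assms hub_in_B[OF link(1)]] R(3) by auto
      ultimately show ?thesis using link(2) unfolding link_def by (auto intro!: lex_edges_crossI)
    qed
  qed
  ultimately show ?thesis unfolding steiner_tree_def by blast
qed

lemma blowup_edge_cases:
  assumes "e \<in> blowup_edges p"
  obtains (layer) x f where "f \<in> RE p" "e = Pair x ` f"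
    | (link) e' where "e' \<in> TE 0" "e = link p e'"
  using assms unfolding blowup_edges_def by blast

lemma fst_image_layer_edge: "p < l \<Longrightarrow> f \<in> RE p \<Longrightarrow> fst ` Pair x ` f = {x}"
  using graph_edgeD[OF R_tree(2)] by fastforce

lemma fst_image_link_ne_singleton: "e \<in> TE 0 \<Longrightarrow> fst ` link p e \<noteq> {x}"
  using graph_edge_ne_singleton[OF T_tree(2)[OF k_pos]] fst_image_link by metis

lemma links_distinct:
  assumes "p < l" "p' < l" "p \<noteq> p'" "e1 \<in> TE 0" "e2 \<in> TE 0"
  shows "link p e1 \<noteq> link p' e2"
proof
  assume eq: "link p e1 = link p' e2"
  then have "e1 = e2"
    using fst_image_link[OF \<open>e1 \<in> TE 0\<close>, of p] fst_image_link[OF \<open>e2 \<in> TE 0\<close>, of p'] by simp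
  with eq have "R_nbr p (hub e1) = R_nbr p' (hub e1)"
    using src_ne_tgt[OF \<open>e1 \<in> TE 0\<close>] unfolding link_def by (auto simp: doubleton_eq_iff)
  then have "{hub e1, R_nbr p (hub e1)} \<in> RE p'"
    using R_nbr[OF assms(2) hub_in_B[OF \<open>e1 \<in> TE 0\<close>]] by simp
  moreover have "{hub e1, R_nbr p (hub e1)} \<in> RE p"
    using R_nbr[OF assms(1) hub_in_B[OF \<open>e1 \<in> TE 0\<close>]] .
  ultimately show False using R_disjoint[OF assms(1-3)] by blast
qed

lemma blowup_edges_disjoint:
  assumes "p < l" "p' < l" "p \<noteq> p'"
  shows "blowup_edges p \<inter> blowup_edges p' = {}"
proof -
  have False if e: "e \<in> blowup_edges p" "e \<in> blowup_edges p'" for e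
    using e(1)
  proof (cases rule: blowup_edge_cases)
    case (layer x f)
    from e(2) show False
    proof (cases rule: blowup_edge_cases)
      case (layer x' f')
      have "fst ` e = {x}" using fst_image_layer_edge[OF assms(1) \<open>f \<in> RE p\<close>] \<open>e = Pair x ` f\<close> by simp
      moreover have "fst ` e = {x'}" using fst_image_layer_edge[OF assms(2) \<open>f' \<in> RE p'\<close>] \<open>e = Pair x' ` f'\<close> by simp
      ultimately have "x = x'" by simp
      then have "Pair x ` f = Pair x ` f'" using \<open>e = Pair x ` f\<close> \<open>e = Pair x' ` f'\<close> by simp
      moreover have "inj (Pair x)" by (simp add: inj_on_def)
      ultimately have "f = f'" by (metis inj_image_eq_iff)
      with R_disjoint[OF assms] \<open>f \<in> RE p\<close> \<open>f' \<in> RE p'\<close> show False by blast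
    next
      case (link e')
      with fst_image_layer_edge[OF assms(1) \<open>f \<in> RE p\<close>] \<open>e = Pair x ` f\<close>
        fst_image_link_ne_singleton show False by metis
    qed
  next
    case (link e1)
    from e(2) show False
    proof (cases rule: blowup_edge_cases)
      case (layer x' f')
      with fst_image_layer_edge[OF assms(2) \<open>f' \<in> RE p'\<close>] \<open>e = link p e1\<close> \<open>e1 \<in> TE 0\<close>
        fst_image_link_ne_singleton show False by metis
    next
      case (link e2)
      with \<open>e = link p e1\<close> \<open>e1 \<in> TE 0\<close> links_distinct[OF assms] show False by metis
    qed
  qed
  then show ?thesis by blast
qed

lemma copy_edges_disjoint_blowup:
  assumes adm: "admissible \<sigma> w" and "t < k" "j \<in> VH" "p < l"
    and ok: "\<And>e. e \<in> TE 0 \<Longrightarrow> link_ok \<sigma> w (src e) (tgt e) (foot p e) (R_nbr p (hub e))"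
  shows "copy_edges S (\<sigma> t) (w t) (TE t) j \<inter> blowup_edges p = {}"
proof -
  interpret tree_copies VG EG VH EH S "TV t" "TE t" "\<sigma> t" "w t"
    using tree_copies_T[OF adm \<open>t < k\<close>] .
  have False if e: "e \<in> copy_edges S (\<sigma> t) (w t) (TE t) j" "e \<in> blowup_edges p" for e
    using e(2)
  proof (cases rule: blowup_edge_cases)
    case (layer x f)
    with fst_image_layer_edge[OF \<open>p < l\<close>] copy_edge_not_vertical[OF adm \<open>t < k\<close> e(1)] show False
      by metis
  next
    case (link e')
    have "e' \<in> TE t" using fst_image_copy_edge[OF e(1)] fst_image_link[OF link(1)] link(2) by simp
    have "t = 0"
    proof (rule ccontr)
      assume "t \<noteq> 0"
      with \<open>e' \<in> TE t\<close> link(1) T_disjoint[OF \<open>t < k\<close> k_pos] show False by auto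
    qed
    have "{(src e', foot p e'), (tgt e', R_nbr p (hub e'))} \<notin> copy_edges S (\<sigma> 0) (w 0) (TE 0) j"
      using tree_copies.link_not_copy_edge[OF tree_copies_T[OF adm k_pos] src_ne_tgt[OF link(1)]]
        ok[OF link(1)] \<open>j \<in> VH\<close> unfolding link_ok_def by blast
    with e(1) link(2) \<open>t = 0\<close> show False unfolding link_def by simp
  qed
  then show ?thesis by blast
qed

lemma packing_from_blowup:
  assumes adm: "admissible \<sigma> w"
    and ok: "\<And>p e. p < l \<Longrightarrow> e \<in> TE 0 \<Longrightarrow> link_ok \<sigma> w (src e) (tgt e) (foot p e) (R_nbr p (hub e))"
  shows "steiner_packing (VG \<times> VH) (lex_edges VG EG VH EH) S (k * card VH + l)"
proof (rule steiner_packing_from_copies[OF adm])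
  show "steiner_tree (VG \<times> VH) (lex_edges VG EG VH EH) S (TV 0 \<times> RV p) (blowup_edges p)" if "p < l" for p
    using that by (rule blowup_steiner_tree)
  show "blowup_edges p \<inter> blowup_edges p' = {}" if "p < l" "p' < l" "p \<noteq> p'" for p p'
    using that by (rule blowup_edges_disjoint)
  show "copy_edges S (\<sigma> t) (w t) (TE t) j \<inter> blowup_edges p = {}" if "t < k" "j \<in> VH" "p < l" for t j p
    using adm that ok[OF \<open>p < l\<close>] by (rule copy_edges_disjoint_blowup)
qed

end

context lex_packing_setting
begin

lemma packing_from_links:
  assumes adm: "admissible \<sigma> w"
    and links: "\<And>e. e \<in> TE 0 \<Longrightarrow>
      \<exists>x y z. e = {x, y} \<and> z \<in> B \<and> (\<forall>p<l. \<exists>a\<in>RV p. link_ok \<sigma> w x y a (R_nbr p z))"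
  shows "steiner_packing (VG \<times> VH) (lex_edges VG EG VH EH) S (k * card VH + l)"
proof -
  define good where "good e q \<longleftrightarrow> e = {fst q, fst (snd q)} \<and> snd (snd q) \<in> B \<and>
      (\<forall>p<l. \<exists>a\<in>RV p. link_ok \<sigma> w (fst q) (fst (snd q)) a (R_nbr p (snd (snd q))))" for e q
  have "\<exists>q. good e q" if e: "e \<in> TE 0" for e
  proof -
    obtain x y z where "e = {x, y}" "z \<in> B" "\<forall>p<l. \<exists>a\<in>RV p. link_ok \<sigma> w x y a (R_nbr p z)"
      using links[OF e] by (elim exE conjE)
    then have "good e (x, y, z)" unfolding good_def by simp
    then show ?thesis ..
  qed
  then obtain F where F: "\<And>e. e \<in> TE 0 \<Longrightarrow> good e (F e)" by metis
  define src where "src e = fst (F e)" for e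
  define tgt where "tgt e = fst (snd (F e))" for e
  define hub where "hub e = snd (snd (F e))" for e
  have F': "e = {src e, tgt e} \<and> hub e \<in> B \<and>
      (\<forall>p<l. \<exists>a\<in>RV p. link_ok \<sigma> w (src e) (tgt e) a (R_nbr p (hub e)))" if "e \<in> TE 0" for e
    using F[OF that] unfolding good_def src_def tgt_def hub_def .
  define foot where "foot p e = (SOME a. a \<in> RV p \<and> link_ok \<sigma> w (src e) (tgt e) a (R_nbr p (hub e)))"
    for p e
  have foot: "foot p e \<in> RV p \<and> link_ok \<sigma> w (src e) (tgt e) (foot p e) (R_nbr p (hub e))"
    if "p < l" "e \<in> TE 0" for p e
  proof -
    from F'[OF \<open>e \<in> TE 0\<close>, THEN conjunct2, THEN conjunct2] \<open>p < l\<close> obtain a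
      where "a \<in> RV p \<and> link_ok \<sigma> w (src e) (tgt e) a (R_nbr p (hub e))"
      by blast
    then show ?thesis unfolding foot_def by (rule someI)
  qed
  interpret lex_packing_blowup VG EG VH EH S B k TV TE l RV RE src tgt hub foot
  proof (intro lex_packing_blowup.intro lex_packing_setting_axioms lex_packing_blowup_axioms.intro)
    show "e = {src e, tgt e}" if "e \<in> TE 0" for e
      using F'[OF that] by (rule conjunct1)
    show "hub e \<in> B" if "e \<in> TE 0" for e
      using F'[OF that] by (elim conjE)
    show "foot p e \<in> RV p" if "p < l" "e \<in> TE 0" for p e
      using foot[OF that] ..
  qed
  show ?thesis
  proof (rule packing_from_blowup[OF adm])
    show "link_ok \<sigma> w (src e) (tgt e) (foot p e) (R_nbr p (hub e))" if "p < l" "e \<in> TE 0" for p e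
      using foot[OF that] by (rule conjunct2)
  qed
qed

lemma ex_B_off_column:
  assumes "2 \<le> card (fst ` S)"
  shows "\<exists>z\<in>B. (x, z) \<notin> S"
proof (rule ccontr)
  assume "\<not> ?thesis"
  then have "Pair x ` B \<subseteq> S" by blast
  moreover have "card (Pair x ` B) = card S" using card_B card_S by (simp add: card_image inj_on_def)
  ultimately have "Pair x ` B = S" by (rule card_subset_eq[OF finite_S])
  then have "fst ` S \<subseteq> {x}" by auto
  then have "card (fst ` S) \<le> 1" using card_mono[of "{x}"] by fastforce
  with assms show False by simp
qed

lemma packing_without_mutual_neighbours:
  assumes "2 \<le> card (fst ` S)"
    and nbr: "\<And>t x. t < k \<Longrightarrow> x \<in> fst ` S \<Longrightarrow> {x, w t x} \<in> TE t"
    and nonmutual: "\<And>t x y. t < k \<Longrightarrow> x \<in> fst ` S \<Longrightarrow> y \<in> fst ` S \<Longrightarrow> w t x = y \<Longrightarrow> w t y \<noteq> x"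
  shows "steiner_packing (VG \<times> VH) (lex_edges VG EG VH EH) S (k * card VH + l)"
proof -
  have adm: "admissible (\<lambda>t x j. j) w"
  proof (rule admissibleI)
    fix t s s' j j' assume "t < k" "s \<in> S" "s' \<in> S" "w t (fst s) = fst s'" "w t (fst s') = fst s"
    with nonmutual[of t "fst s" "fst s'"] show "j = j'" by auto
  qed (auto simp: nbr bij_betw_def)
  show ?thesis
  proof (rule packing_from_links[OF adm])
    fix e assume "e \<in> TE 0"
    then obtain x0 y0 where e: "e = {x0, y0}" using graph_edgeD[OF T_tree(2)[OF k_pos]] by blast
    text \<open>Orient the edge so that its head does not choose its tail as neighbour, and let the link
      start outside \<open>S\<close>.\<close>
    obtain x y where xy: "e = {x, y}" "y \<in> fst ` S \<longrightarrow> w 0 y \<noteq> x"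
    proof (cases "y0 \<in> fst ` S \<and> w 0 y0 = x0")
      case True
      then have "x0 \<in> fst ` S \<longrightarrow> w 0 x0 \<noteq> y0" using nonmutual[OF k_pos] by blast
      moreover have "e = {y0, x0}" using e by (simp add: insert_commute)
      ultimately show ?thesis by (rule that[rotated])
    next
      case False
      with e show ?thesis using that by blast
    qed
    obtain z where z: "z \<in> B" "(x, z) \<notin> S" using ex_B_off_column[OF assms(1)] by blast
    have "z \<in> RV p \<and> link_ok (\<lambda>t x j. j) w x y z (R_nbr p z)" if "p < l" for p
      unfolding link_ok_def
    proof (intro conjI impI ballI)
      show "z \<in> RV p" using R_tree(5)[OF that] z(1) by blast
      show "w 0 x \<noteq> y" if "(x, z) \<in> S" using z(2) that by contradiction
      show "w 0 y \<noteq> x" if "(y, R_nbr p z) \<in> S" using xy(2) that by force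
      show "\<not> (j = z \<and> j = R_nbr p z)" for j using R_nbr_ne[OF that z(1)] by auto
    qed
    with xy(1) z(1) show "\<exists>x y z. e = {x, y} \<and> z \<in> B \<and>
        (\<forall>p<l. \<exists>a\<in>RV p. link_ok (\<lambda>t x j. j) w x y a (R_nbr p z))" by blast
  qed
qed

lemma packing_two_columns:
  assumes cols: "fst ` S = {u, u'}" and "u \<noteq> u'"
  shows "steiner_packing (VG \<times> VH) (lex_edges VG EG VH EH) S (k * card VH + l)"
proof -
  have "\<exists>a b. {u, a} \<in> TE t \<and> {u', b} \<in> TE t \<and> \<not> (a = u' \<and> b = u)" if t: "t < k" for t
  proof -
    have "u \<in> TV t" "u' \<in> TV t" using T_tree(5)[OF t] cols by auto
    then obtain a b where "{u, a} \<in> TE t" "{u', b} \<in> TE t" "\<not> (a = u' \<and> b = u)"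
      using is_tree_nonmutual_neighbours[OF T_tree(1)[OF t] T_card[OF t]] \<open>u \<noteq> u'\<close> by metis
    then show ?thesis by blast
  qed
  then obtain a b where ab: "\<And>t. t < k \<Longrightarrow> {u, a t} \<in> TE t \<and> {u', b t} \<in> TE t \<and> \<not> (a t = u' \<and> b t = u)"
    by metis
  define w where "w t x = (if x = u then a t else b t)" for t x
  have nbr: "{x, w t x} \<in> TE t" if "t < k" "x \<in> fst ` S" for t x
    using that ab \<open>u \<noteq> u'\<close> cols unfolding w_def by auto
  show ?thesis
  proof (rule packing_without_mutual_neighbours)
    show "2 \<le> card (fst ` S)" using cols \<open>u \<noteq> u'\<close> by simp
    show "{x, w t x} \<in> TE t" if "t < k" "x \<in> fst ` S" for t x using nbr[OF that] .
    show "w t y \<noteq> x" if "t < k" "x \<in> fst ` S" "y \<in> fst ` S" "w t x = y" for t x y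
    proof -
      have "x \<noteq> y" using graph_doubleton_edgeD(3)[OF T_tree(2)[OF that(1)] nbr[OF that(1,2)]] that(4) by simp
      with that cols ab[OF that(1)] \<open>u \<noteq> u'\<close> show ?thesis unfolding w_def by auto
    qed
  qed
qed

lemma column_heightE:
  assumes inj: "inj_on fst S" and "j0 \<in> B"
  obtains col where "\<And>x v. (x, v) \<in> S \<longleftrightarrow> x \<in> fst ` S \<and> v = col x" "\<And>x. col x \<in> B"
proof
  define col where "col x = (if x \<in> fst ` S then SOME v. (x, v) \<in> S else j0)" for x
  show S_iff: "(x, v) \<in> S \<longleftrightarrow> x \<in> fst ` S \<and> v = col x" for x v
  proof
    assume xv: "(x, v) \<in> S"
    then have x: "x \<in> fst ` S" by force
    with xv have "(x, col x) \<in> S" unfolding col_def by (auto intro: someI)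
    with xv x inj show "x \<in> fst ` S \<and> v = col x" by (force simp: inj_on_def)
  next
    assume x: "x \<in> fst ` S \<and> v = col x"
    then have "v = (SOME v. (x, v) \<in> S)" unfolding col_def by simp
    moreover obtain v' where "(x, v') \<in> S" using x by force
    ultimately show "(x, v) \<in> S" using someI[of "\<lambda>v. (x, v) \<in> S" v'] by simp
  qed
  show "col x \<in> B" for x
  proof (cases "x \<in> fst ` S")
    case True
    then have "(x, col x) \<in> S" using S_iff by simp
    then show ?thesis using snd_S_subset by force
  next
    case False
    then show ?thesis using \<open>j0 \<in> B\<close> unfolding col_def by simp
  qed
qed

lemma packing_three_columns:
  assumes "inj_on fst S"
  shows "steiner_packing (VG \<times> VH) (lex_edges VG EG VH EH) S (k * card VH + l)"
proof -
  obtain j0 where "j0 \<in> B" using card_B by (metis card.empty ex_in_conv zero_neq_numeral)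
  then obtain col where S_iff: "\<And>x v. (x, v) \<in> S \<longleftrightarrow> x \<in> fst ` S \<and> v = col x"
    and col_B: "\<And>x. col x \<in> B"
    using column_heightE[OF assms] by blast
  text \<open>Twisting column \<open>x\<close> by the transposition of \<open>j0\<close> and \<open>col x\<close> puts the vertex of \<open>S\<close> in that
    column on the copy \<open>j0\<close> only, so no two copies share a leaf.\<close>
  define \<sigma> where "\<sigma> t x = Transposition.transpose j0 (col x)" for t :: nat and x
  have \<sigma>_involutory: "\<sigma> t x (\<sigma> t x j) = j" for t x j by (simp add: \<sigma>_def)
  have adm: "admissible \<sigma> T_nbr"
  proof (rule admissibleI)
    show "{x, T_nbr t x} \<in> TE t" if "t < k" "x \<in> fst ` S" for t x using T_nbr[OF that] .
    show "bij_betw (\<sigma> t x) VH VH" for t x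
    proof -
      have "j0 \<in> VH" "col x \<in> VH" using B_subset col_B[of x] \<open>j0 \<in> B\<close> by auto
      then show ?thesis unfolding \<sigma>_def by simp
    qed
    have "j = j0" if "s \<in> S" "\<sigma> t (fst s) j = snd s" for t s j
    proof -
      have "snd s = col (fst s)" using S_iff[of "fst s" "snd s"] \<open>s \<in> S\<close> by simp
      with that(2) have "Transposition.transpose j0 (col (fst s)) j = col (fst s)" unfolding \<sigma>_def by simp
      then show "j = j0" by (auto simp: transpose_eq_iff)
    qed
    then show "j = j'" if "s \<in> S" "s' \<in> S" "\<sigma> t (fst s) j' = snd s" "\<sigma> t (fst s') j = snd s'"
      for t s s' j j' using that by metis
  qed
  show ?thesis
  proof (rule packing_from_links[OF adm])
    fix e assume "e \<in> TE 0"
    then obtain x y where e: "e = {x, y}" using graph_edgeD[OF T_tree(2)[OF k_pos]] by blast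
    have "\<exists>a\<in>RV p. link_ok \<sigma> T_nbr x y a (R_nbr p (col y))" if p: "p < l" for p
    proof -
      let ?b = "R_nbr p (col y)"
      obtain a where a: "a \<in> RV p" "a \<noteq> col x" "a \<noteq> \<sigma> 0 x (\<sigma> 0 y ?b)"
        using ex_other_of_card_ge_3[OF card_RV[OF p]] by blast
      have "link_ok \<sigma> T_nbr x y a ?b"
        unfolding link_ok_def
      proof (intro conjI impI ballI)
        show "T_nbr 0 x \<noteq> y" if "(x, a) \<in> S" using S_iff that a(2) by simp
        show "T_nbr 0 y \<noteq> x" if "(y, ?b) \<in> S" using S_iff that R_nbr_ne[OF \<open>p < l\<close> col_B] by simp
        show "\<not> (\<sigma> 0 x j = a \<and> \<sigma> 0 y j = ?b)" for j
          using a(3) \<sigma>_involutory by metis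
      qed
      with a(1) show ?thesis by blast
    qed
    with e col_B show "\<exists>x y z. e = {x, y} \<and> z \<in> B \<and> (\<forall>p<l. \<exists>a\<in>RV p. link_ok \<sigma> T_nbr x y a (R_nbr p z))"
      by blast
  qed
qed

lemma steiner_packing_lex: "steiner_packing (VG \<times> VH) (lex_edges VG EG VH EH) S (k * card VH + l)"
proof -
  have "card (fst ` S) \<le> 3" using card_image_le[OF finite_S] card_S by simp
  moreover have "card (fst ` S) \<noteq> 0" using finite_S card_S by auto
  ultimately consider "card (fst ` S) = 1" | "card (fst ` S) = 2" | "card (fst ` S) = 3" by linarith
  then show ?thesis
  proof cases
    case 1
    then obtain u where "fst ` S = {u}" using card_1_singletonE by blast
    then show ?thesis by (intro packing_single_column) simp
  next
    case 2
    then obtain u u' where "fst ` S = {u, u'}" "u \<noteq> u'" using card_2_iff by metis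
    then show ?thesis by (rule packing_two_columns)
  next
    case 3
    then have "inj_on fst S" using card_S finite_S by (simp add: eq_card_imp_inj_on)
    then show ?thesis by (rule packing_three_columns)
  qed
qed

end

section \<open>The lower bound and its sharpness\<close>

lemma lambda_k_pos:
  assumes g: "graph V E" and conn: "connected_graph V E" and "2 \<le> n" "n \<le> card V"
  shows "0 < lambda_k n V E"
proof -
  have "V \<noteq> {}" using assms(3,4) by auto
  then obtain x0 where "x0 \<in> V" by blast
  then obtain ET where ET: "ET \<subseteq> E" "is_tree V ET" using spanning_tree_exists[OF g conn] by blast
  have "steiner_packing V E S 1" if "S \<subseteq> V" for S
  proof -
    have "steiner_tree V E S V ET" using ET that unfolding steiner_tree_def by blast
    then show ?thesis unfolding steiner_packing_def by (intro exI[of _ "\<lambda>i. (V, ET)"]) simp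
  qed
  then have "1 \<le> lambda_k n V E" using lambda_k_geI[OF g assms(3,4)] by simp
  then show ?thesis by simp
qed

lemma steiner_packing_lex_product:
  assumes gG: "graph VG EG" and gH: "graph VH EH" and "3 \<le> card VG" "3 \<le> card VH"
    and "0 < lambda_k 3 VG EG" and S: "S \<subseteq> VG \<times> VH" "card S = 3"
  shows "steiner_packing (VG \<times> VH) (lex_edges VG EG VH EH) S
    (lambda_k 3 VG EG * card VH + lambda_k 3 VH EH)"
proof -
  have finS: "finite S" using S(2) card.infinite by fastforce
  have finG: "finite VG" and finH: "finite VH" using gG gH unfolding graph_def by auto
  have "fst ` S \<subseteq> VG" "snd ` S \<subseteq> VH" using S(1) by auto
  moreover have "card (fst ` S) \<le> 3" "card (snd ` S) \<le> 3"
    using card_image_le[OF finS] S(2) by (metis)+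
  ultimately obtain A B where A: "fst ` S \<subseteq> A" "A \<subseteq> VG" "card A = 3"
    and B: "snd ` S \<subseteq> B" "B \<subseteq> VH" "card B = 3"
    using ex_superset_with_card[OF finG _ _ \<open>3 \<le> card VG\<close>]
      ex_superset_with_card[OF finH _ _ \<open>3 \<le> card VH\<close>] by meson
  have two_le_three: "2 \<le> (3 :: nat)" by simp
  obtain T where T: "\<forall>t<lambda_k 3 VG EG. steiner_tree VG EG A (fst (T t)) (snd (T t))"
    "\<forall>t<lambda_k 3 VG EG. \<forall>t'<lambda_k 3 VG EG. t \<noteq> t' \<longrightarrow> snd (T t) \<inter> snd (T t') = {}"
    using steiner_packing_lambda_k[OF gG A(2,3) two_le_three] unfolding steiner_packing_def by blast
  obtain R where R: "\<forall>p<lambda_k 3 VH EH. steiner_tree VH EH B (fst (R p)) (snd (R p))"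
    "\<forall>p<lambda_k 3 VH EH. \<forall>p'<lambda_k 3 VH EH. p \<noteq> p' \<longrightarrow> snd (R p) \<inter> snd (R p') = {}"
    using steiner_packing_lambda_k[OF gH B(2,3) two_le_three] unfolding steiner_packing_def by blast
  interpret lex_packing_setting VG EG VH EH S B "lambda_k 3 VG EG" "\<lambda>t. fst (T t)" "\<lambda>t. snd (T t)"
    "lambda_k 3 VH EH" "\<lambda>p. fst (R p)" "\<lambda>p. snd (R p)"
  proof
    show "graph VH EH" by (fact gH)
    show "S \<subseteq> VG \<times> VH" "card S = 3" by (fact S(1), fact S(2))
    show "B \<subseteq> VH" "card B = 3" "snd ` S \<subseteq> B" by (fact B(2), fact B(3), fact B(1))
    show "0 < lambda_k 3 VG EG" by (fact \<open>0 < lambda_k 3 VG EG\<close>)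
    show "steiner_tree VG EG (fst ` S) (fst (T t)) (snd (T t))" if "t < lambda_k 3 VG EG" for t
      using T(1) that A(1) unfolding steiner_tree_def by blast
    show "3 \<le> card (fst (T t))" if "t < lambda_k 3 VG EG" for t
    proof -
      have "A \<subseteq> fst (T t)" "is_tree (fst (T t)) (snd (T t))"
        using T(1) that unfolding steiner_tree_def by simp_all
      then show ?thesis using card_mono[OF is_treeD(2)] A(3) by metis
    qed
    show "snd (T t) \<inter> snd (T t') = {}" if "t < lambda_k 3 VG EG" "t' < lambda_k 3 VG EG" "t \<noteq> t'" for t t'
      using T(2) that by simp
    show "steiner_tree VH EH B (fst (R p)) (snd (R p))" if "p < lambda_k 3 VH EH" for p
      using R(1) that by simp
    show "snd (R p) \<inter> snd (R p') = {}" if "p < lambda_k 3 VH EH" "p' < lambda_k 3 VH EH" "p \<noteq> p'" for p p'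
      using R(2) that by simp
  qed
  show ?thesis by (rule steiner_packing_lex)
qed

theorem lambda_k_lex_ge:
  assumes gG: "graph VG EG" and gH: "graph VH EH" and "3 \<le> card VG" "3 \<le> card VH"
    and conn: "connected_graph VG EG"
  shows "lambda_k 3 VH EH + lambda_k 3 VG EG * card VH \<le> lambda_k 3 (VG \<times> VH) (lex_edges VG EG VH EH)"
proof -
  have "0 < lambda_k 3 VG EG" using lambda_k_pos[OF gG conn] \<open>3 \<le> card VG\<close> by simp
  moreover have "3 \<le> card (VG \<times> VH)"
  proof -
    have "3 * 1 \<le> card VG * card VH" using \<open>3 \<le> card VG\<close> \<open>3 \<le> card VH\<close> by (intro mult_mono) auto
    then show ?thesis by (simp add: card_cartesian_product)
  qed
  ultimately have "lambda_k 3 VG EG * card VH + lambda_k 3 VH EH \<le> lambda_k 3 (VG \<times> VH) (lex_edges VG EG VH EH)"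
    using lambda_k_geI[OF graph_lex_edges[OF gG gH], of 3] \<open>3 \<le> card VH\<close>
      steiner_packing_lex_product[OF assms(1-4)] by simp
  then show ?thesis by simp
qed

lemma lambda_k_edgeless:
  assumes "2 \<le> card V"
  shows "lambda_k n V {} = 0"
proof -
  have "V \<noteq> {}" using assms by auto
  then obtain x where "x \<in> V" by blast
  moreover obtain y where "y \<in> V" "y \<noteq> x" using ex_other_of_card_ge_2[OF assms] by blast
  moreover have "adj_rel V {} = {}" unfolding adj_rel_def by simp
  ultimately have "\<not> connected_graph V {}" unfolding connected_graph_def by auto
  then show ?thesis unfolding lambda_k_def by simp
qed

lemma graph_path3: "graph {0, 1, 2 :: nat} {{0, 1}, {1, 2}}"
  unfolding graph_def
proof (intro conjI ballI)
  fix e :: "nat set" assume "e \<in> {{0, 1}, {1, 2}}"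
  then consider "e = {0, 1}" | "e = {1, 2}" by blast
  then show "\<exists>x y. x \<in> {0, 1, 2} \<and> y \<in> {0, 1, 2} \<and> x \<noteq> y \<and> e = {x, y}"
  proof cases
    case 1
    then show ?thesis by (intro exI[of _ 0] exI[of _ 1]) simp
  next
    case 2
    then show ?thesis by (intro exI[of _ 1] exI[of _ 2]) simp
  qed
qed simp

lemma connected_path3: "connected_graph {0, 1, 2 :: nat} {{0, 1}, {1, 2}}"
  unfolding connected_graph_def
proof (intro ballI)
  let ?A = "adj_rel {0, 1, 2 :: nat} {{0, 1}, {1, 2}}"
  have "(0, 1) \<in> ?A" "(1, 0) \<in> ?A" "(1, 2) \<in> ?A" "(2, 1) \<in> ?A"
    unfolding adj_rel_def by (auto simp: insert_commute)
  then have "(x, 1) \<in> ?A\<^sup>*" "(1, y) \<in> ?A\<^sup>*" if "x \<in> {0, 1, 2}" "y \<in> {0, 1, 2}" for x y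
    using that by auto
  then show "(x, y) \<in> ?A\<^sup>*" if "x \<in> {0, 1, 2}" "y \<in> {0, 1, 2}" for x y
    using that by (meson rtrancl_trans)
qed

lemma lex_edges_edgeless_incident:
  assumes "e \<in> lex_edges VG EG VH {}" "(u, v) \<in> e"
  obtains u' v' where "{u, u'} \<in> EG" "v' \<in> VH" "e = {(u, v), (u', v')}"
proof -
  from assms(1) obtain a b a' b' where e: "e = {(a, b), (a', b')}" "b \<in> VH" "b' \<in> VH" "{a, a'} \<in> EG"
    unfolding lex_edges_def by blast
  from assms(2) e(1) consider "(u, v) = (a, b)" | "(u, v) = (a', b')" by blast
  then show ?thesis
  proof cases
    case 1
    with e show ?thesis by (intro that[of a' b']) simp_all
  next
    case 2
    with e show ?thesis by (intro that[of a b]) (simp_all add: insert_commute)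
  qed
qed

lemma lambda_k_lex_path3_edgeless_le:
  "lambda_k 3 ({0, 1, 2 :: nat} \<times> {0, 1, 2 :: nat}) (lex_edges {0, 1, 2} {{0, 1}, {1, 2}} {0, 1, 2} {}) \<le> 3"
proof -
  let ?V = "{0, 1, 2 :: nat} \<times> {0, 1, 2 :: nat}" and ?E = "lex_edges {0, 1, 2 :: nat} {{0, 1}, {1, 2}} {0, 1, 2 :: nat} {}"
  let ?S = "{(0, 0), (1, 0), (2, 0)} :: (nat \<times> nat) set"
  have "lambda_k 3 ?V ?E \<le> lambda_S ?V ?E ?S" by (rule lambda_k_le_lambda_S) auto
  also have "\<dots> \<le> card {e \<in> ?E. (0, 0) \<in> e}"
    by (rule lambda_S_le_degree[OF graph_lex_edges[OF graph_path3]]) (auto simp: graph_def)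
  also have "\<dots> \<le> card ((\<lambda>b. {(0 :: nat, 0 :: nat), (1, b)}) ` {0, 1, 2 :: nat})"
  proof (rule card_mono)
    show "{e \<in> ?E. (0, 0) \<in> e} \<subseteq> (\<lambda>b. {(0 :: nat, 0 :: nat), (1, b)}) ` {0, 1, 2}"
    proof clarify
      fix e assume "e \<in> ?E" "(0, 0) \<in> e"
      then obtain u' v' where "{0, u'} \<in> {{0, 1}, {1, 2 :: nat}}" "v' \<in> {0, 1, 2 :: nat}" "e = {(0, 0), (u', v')}"
        by (rule lex_edges_edgeless_incident)
      moreover from this have "u' = 1" by (auto simp: doubleton_eq_iff)
      ultimately show "e \<in> (\<lambda>b. {(0 :: nat, 0 :: nat), (1, b)}) ` {0, 1, 2}" by blast
    qed
  qed simp
  also have "\<dots> \<le> 3" using card_image_le[of "{0, 1, 2 :: nat}" "\<lambda>b. {(0 :: nat, 0 :: nat), (1, b)}"] by simp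
  finally show ?thesis .
qed

lemma lambda_k_lex_bound_sharp:
  "\<exists>(VG :: nat set) EG (VH :: nat set) EH.
      graph VG EG \<and> graph VH EH \<and> card VG \<ge> 3 \<and> card VH \<ge> 3 \<and> connected_graph VG EG \<and>
      lambda_k 3 (VG \<times> VH) (lex_edges VG EG VH EH) = lambda_k 3 VH EH + lambda_k 3 VG EG * card VH"
proof (intro exI conjI)
  let ?VG = "{0, 1, 2 :: nat}" and ?EG = "{{0, 1}, {1, 2 :: nat}}" and ?VH = "{0, 1, 2 :: nat}"
  have gH: "graph ?VH {}" unfolding graph_def by simp
  have "lambda_k 3 ?VH {} + lambda_k 3 ?VG ?EG * card ?VH \<le> lambda_k 3 (?VG \<times> ?VH) (lex_edges ?VG ?EG ?VH {})"
    by (rule lambda_k_lex_ge[OF graph_path3 gH _ _ connected_path3]) simp_all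
  moreover have "0 < lambda_k 3 ?VG ?EG" by (rule lambda_k_pos[OF graph_path3 connected_path3]) simp_all
  moreover have "lambda_k 3 ?VH {} = 0" by (rule lambda_k_edgeless) simp
  ultimately show "lambda_k 3 (?VG \<times> ?VH) (lex_edges ?VG ?EG ?VH {}) =
      lambda_k 3 ?VH {} + lambda_k 3 ?VG ?EG * card ?VH"
    using lambda_k_lex_path3_edgeless_le by simp
qed (use graph_path3 connected_path3 in \<open>simp_all add: graph_def\<close>)

theorem theorem1:
  shows "(\<forall>(VG :: 'a set) EG (VH :: 'b set) EH.
            graph VG EG \<and> graph VH EH \<and> card VG \<ge> 3 \<and> card VH \<ge> 3 \<and> connected_graph VG EG \<longrightarrow>
            lambda_k 3 (VG \<times> VH) (lex_edges VG EG VH EH)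
              \<ge> lambda_k 3 VH EH + lambda_k 3 VG EG * card VH)
       \<and> (\<exists>(VG :: nat set) EG (VH :: nat set) EH.
            graph VG EG \<and> graph VH EH \<and> card VG \<ge> 3 \<and> card VH \<ge> 3 \<and> connected_graph VG EG \<and>
            lambda_k 3 (VG \<times> VH) (lex_edges VG EG VH EH)
              = lambda_k 3 VH EH + lambda_k 3 VG EG * card VH)"
  using lambda_k_lex_ge lambda_k_lex_bound_sharp by blast

end
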